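(* For every positive integer $n$, the function $\Phi'$ is a bijection between well-labelled positive paths of size $n$ and marked labelled binary trees with $n$ leaves.
   Context: A well-labelled path of size $n$ is a pair $(\mathbf{p},\sigma)$ where $\mathbf{p}=p_1\ldots p_{n-1}$ is a word on $\{-1,0,+1\}$ and $\sigma=\sigma_1\ldots\sigma_n$ is a permutation of $[n]=\{1,\ldots,n\}$ such that $p_i=-1$ implies $\sigma_i<\sigma_{i+1}$ and $p_i=1$ implies $\sigma_i>\sigma_{i+1}$. It is Motzkin if $\sum_{i=1}^j p_i\ge 0$ for $j=1,\ldots,n-2$ and $\sum_{i=1}^{n-1}p_i=-1$; it is positive if $\sum_{i=1}^j p_i\ge0$ for all $j=1,\ldots,n-1$. For a set $I$ of $m$ integers, $\lambda_I$ is the order-preserving bijection from $[m]$ to $I$. A labelled binary tree of size $n$ is a rooted tree with $n$ leaves carrying distinct labels in $[n]$, each (unlabelled) internal vertex having exactly two unordered children; a marked labelled binary tree is one in which one vertex (internal or leaf) is marked. For a bijection $\lambda$ and a tree $\tau$, $\lambda(\tau)$ replaces each leaf label $i$ by $\lambda(i)$. The map $\Phi$ from well-labelled Motzkin paths of size $n\ge2$ to labelled binary trees with $n\ge 2$ leaves is defined recursively: (i) the unique Motzkin path of size 2 ($\mathbf{p}=-1$, $\sigma=12$) maps to the unique tree of size 2; (ii) if $n>2$ and $p_1=0$, set $\mathbf{p}'=p_2\ldots p_{n-1}$, $\sigma'_i=\lambda^{-1}_{[n]\setminus\{\sigma_1\}}(\sigma_{i+1})$, and $\Phi(\mathbf{p},\sigma)$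 is a root with one subtree a leaf labelled $\sigma_1$ and the other subtree $\lambda_{[n]\setminus\{\sigma_1\}}(\Phi(\mathbf{p}',\sigma'))$; (iii) if $n>2$ and $p_1=1$, let $k$ be least with $\sum_{i=1}^k p_i=0$, set $I'=\{\sigma_1,\ldots,\sigma_k\}$, $I''=\{\sigma_{k+1},\ldots,\sigma_n\}$, $p'_i=-p_{k-i}$ ($i<k$), $p''_i=p_{k+i}$ ($i<n-k$), $\sigma'_i=\lambda^{-1}_{I'}(\sigma_{k+1-i})$, $\sigma''_i=\lambda^{-1}_{I''}(\sigma_{k+i})$, and $\Phi(\mathbf{p},\sigma)$ is a root with subtrees $\lambda_{I'}(\Phi(\mathbf{p}',\sigma'))$ and $\lambda_{I''}(\Phi(\mathbf{p}'',\sigma''))$. The map $\Phi'$ on well-labelled positive paths is defined recursively: (i) the path of size 1 maps to the marked tree consisting of a single marked leaf; (ii) if $n>1$ and $p_1=0$, with $\mathbf{p}',\sigma'$ as in (ii) above, $\Phi'(\mathbf{p},\sigma)$ is an unmarked root with one subtree an unmarked leaf labelled $\sigma_1$ and the other the marked subtree $\lambda_{[n]\setminus\{\sigma_1\}}(\Phi'(\mathbf{p}',\sigma'))$; (iii) if $n>1$ and $p_1=1$, let $k\le n$ be the greatest integer such that $\sum_{i=1}^{j-1}p_i\ge1$ for all $j=2,\ldots,k-1$ and $\sum_{i=1}^{k-1}p_i=1$, and define $I',I'',\mathbf{p}',\mathbf{p}'',\sigma',\sigma''$ by the same formulas as in (iii) above. If $k=n$, $\Phi'(\mathbf{p},\sigma)$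 is the tree $\Phi(\mathbf{p}',\sigma')$ with its root marked; if $k<n$, $\Phi'(\mathbf{p},\sigma)$ is an unmarked root with the unmarked subtree $\lambda_{I'}(\Phi(\mathbf{p}',\sigma'))$ and the marked subtree $\lambda_{I''}(\Phi'(\mathbf{p}'',\sigma''))$. *)

theory Defs
  imports Main
begin

text \<open>A vertex carries a boolean flag (True = marked).
  Children of an internal vertex are unordered: trees are identified up to
  the equivalence tree_eq (swapping children at any internal vertex).\<close>

datatype ltree = Leaf bool nat | Node bool ltree ltree

inductive tree_eq :: "ltree \<Rightarrow> ltree \<Rightarrow> bool" where
  leaf: "tree_eq (Leaf m a) (Leaf m a)"
| keep: "tree_eq l l' \<Longrightarrow> tree_eq r r' \<Longrightarrow> tree_eq (Node m l r) (Node m l' r')"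
| swap: "tree_eq l l' \<Longrightarrow> tree_eq r r' \<Longrightarrow> tree_eq (Node m l r) (Node m r' l')"

definition tree_class :: "ltree \<Rightarrow> ltree set" where
  "tree_class t = {t'. tree_eq t t'}"

fun leaves :: "ltree \<Rightarrow> nat list" where
  "leaves (Leaf _ a) = [a]"
| "leaves (Node _ l r) = leaves l @ leaves r"

fun nmarks :: "ltree \<Rightarrow> nat" where
  "nmarks (Leaf m _) = (if m then 1 else 0)"
| "nmarks (Node m l r) = (if m then 1 else 0) + nmarks l + nmarks r"

fun relabel :: "(nat \<Rightarrow> nat) \<Rightarrow> ltree \<Rightarrow> ltree" where
  "relabel f (Leaf m a) = Leaf m (f a)"
| "relabel f (Node m l r) = Node m (relabel f l) (relabel f r)"

fun mark_root :: "ltree \<Rightarrow> ltree" where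
  "mark_root (Leaf _ a) = Leaf True a"
| "mark_root (Node _ l r) = Node True l r"

definition labelled_tree :: "nat \<Rightarrow> ltree \<Rightarrow> bool" where
  "labelled_tree n t \<longleftrightarrow> distinct (leaves t) \<and> set (leaves t) = {1..n}"

definition marked_labelled_tree :: "nat \<Rightarrow> ltree \<Rightarrow> bool" where
  "marked_labelled_tree n t \<longleftrightarrow> labelled_tree n t \<and> nmarks t = 1"

definition marked_trees :: "nat \<Rightarrow> ltree set set" where
  "marked_trees n = {tree_class t | t. marked_labelled_tree n t}"

text \<open>lam I i = i-th smallest element of I (1-indexed); laminv I x = rank of x in I.\<close>
definition lam :: "nat set \<Rightarrow> nat \<Rightarrow> nat" where
  "lam I i = sorted_list_of_set I ! (i - 1)"

definition laminv :: "nat set \<Rightarrow> nat \<Rightarrow> nat" where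
  "laminv I x = card {y \<in> I. y \<le> x}"

section \<open>Well-labelled paths (0-indexed lists: p!i is p_{i+1}, \<sigma>!i is \<sigma>_{i+1})\<close>

definition psum :: "int list \<Rightarrow> nat \<Rightarrow> int" where
  "psum p j = sum_list (take j p)"

definition well_labelled :: "nat \<Rightarrow> int list \<Rightarrow> nat list \<Rightarrow> bool" where
  "well_labelled n p \<sigma> \<longleftrightarrow>
     length p = n - 1 \<and> set p \<subseteq> {-1, 0, 1} \<and>
     length \<sigma> = n \<and> distinct \<sigma> \<and> set \<sigma> = {1..n} \<and>
     (\<forall>i < n - 1. (p ! i = -1 \<longrightarrow> \<sigma> ! i < \<sigma> ! (i+1)) \<and>
                   (p ! i = 1 \<longrightarrow> \<sigma> ! i > \<sigma> ! (i+1)))"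

definition positive_path :: "nat \<Rightarrow> int list \<Rightarrow> nat list \<Rightarrow> bool" where
  "positive_path n p \<sigma> \<longleftrightarrow> well_labelled n p \<sigma> \<and> (\<forall>j \<in> {1..n-1}. psum p j \<ge> 0)"

definition motzkin_path :: "nat \<Rightarrow> int list \<Rightarrow> nat list \<Rightarrow> bool" where
  "motzkin_path n p \<sigma> \<longleftrightarrow> well_labelled n p \<sigma> \<and> (\<forall>j \<in> {1..n-2}. psum p j \<ge> 0)
      \<and> psum p (n - 1) = -1"

lemma diff_less_aux: "(1::nat) \<le> k \<Longrightarrow> k < n \<Longrightarrow> n - k < n"
  by simp

text \<open>Values on inputs that are not well-labelled Motzkin/positive paths are junk.\<close>

function phi :: "int list \<Rightarrow> nat list \<Rightarrow> ltree" where
  "phi p \<sigma> = (let n = length \<sigma> in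
     if n \<le> 2 then Node False (Leaf False 1) (Leaf False 2)
     else if hd p = 0 then
       (let J = {1..n} - {hd \<sigma>} in
        Node False (Leaf False (hd \<sigma>))
          (relabel (lam J) (phi (tl p) (map (laminv J) (tl \<sigma>)))))
     else if hd p = 1 then
       (let k = (LEAST k. 1 \<le> k \<and> psum p k = 0) in
        if 1 \<le> k \<and> k < n then
          (let I1 = set (take k \<sigma>); I2 = set (drop k \<sigma>) in
           Node False
             (relabel (lam I1) (phi (map uminus (rev (take (k - 1) p))) (map (laminv I1) (rev (take k \<sigma>)))))
             (relabel (lam I2) (phi (drop k p) (map (laminv I2) (drop k \<sigma>)))))
        else Leaf False 0)
     else Leaf False 0)"
  by pat_completeness auto
termination
  by (relation "measure (\<lambda>(p, \<sigma>). length \<sigma>)") (auto simp: Let_def)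

function phi' :: "int list \<Rightarrow> nat list \<Rightarrow> ltree" where
  "phi' p \<sigma> = (let n = length \<sigma> in
     if n \<le> 1 then Leaf True (hd \<sigma>)
     else if hd p = 0 then
       (let J = {1..n} - {hd \<sigma>} in
        Node False (Leaf False (hd \<sigma>))
          (relabel (lam J) (phi' (tl p) (map (laminv J) (tl \<sigma>)))))
     else if hd p = 1 then
       (let k = (GREATEST k. k \<le> n \<and> (\<forall>j. 2 \<le> j \<and> j \<le> k - 1 \<longrightarrow> psum p (j - 1) \<ge> 1)
                           \<and> psum p (k - 1) = 1);
            I1 = set (take k \<sigma>); I2 = set (drop k \<sigma>);
            p1 = map uminus (rev (take (k - 1) p)); s1 = map (laminv I1) (rev (take k \<sigma>)) in
        if k = n then mark_root (phi p1 s1)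
        else if 1 \<le> k \<and> k < n then
          Node False (relabel (lam I1) (phi p1 s1))
             (relabel (lam I2) (phi' (drop k p) (map (laminv I2) (drop k \<sigma>))))
        else Leaf False 0)
     else Leaf False 0)"
  by pat_completeness auto
termination
  by (relation "measure (\<lambda>(p, \<sigma>). length \<sigma>)") (auto simp: Let_def simp del: One_nat_def intro: diff_less_aux)

end

theory Submission
  imports Defs
begin

text \<open>
  Both \<open>\<Phi>\<close> and \<open>\<Phi>'\<close> commute with standardization of the
  labels, so it suffices to study label-preserving versions of them on paths labelled by
  arbitrary distinct numbers. Cutting a Motzkin path at its first return to height 0 leaves
  three shapes (a single down step, a flat step followed by a Motzkin path, or two Motzkin
  paths, the first one reversed, joined at a peak), which match the roots with two, one or no
  leaf children. Even after children are swapped, the tree still determines the first and the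
  last label of its path; at a peak the subtree whose path starts with the smaller label is the
  first factor. So the tree determines the path, and conversely every tree is assembled from the
  paths of its subtrees. A positive path starting with an up step is cut after its longest
  excursion above height 1: either nothing remains and the root is marked, or a step and a
  positive path follow, which carries the mark into the right subtree; the same induction
  applies.
\<close>

fun compatible :: "int list \<Rightarrow> nat list \<Rightarrow> bool" where
  "compatible [] [x] = True"
| "compatible (d # p) (x # y # \<sigma>) =
     (d \<in> {-1, 0, 1} \<and> (d = -1 \<longrightarrow> x < y) \<and> (d = 1 \<longrightarrow> y < x) \<and> compatible p (y # \<sigma>))"
| "compatible _ _ = False"

fun nonneg_from :: "int \<Rightarrow> int list \<Rightarrow> bool" where
  "nonneg_from h [] = True"
| "nonneg_from h (d # p) = (0 \<le> h + d \<and> nonneg_from (h + d) p)"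

definition excursion :: "int list \<Rightarrow> bool" where
  "excursion a \<longleftrightarrow> nonneg_from 0 a \<and> sum_list a = 0"

lemma compatible_length: "compatible p \<sigma> \<Longrightarrow> length \<sigma> = length p + 1"
  by (induction p \<sigma> rule: compatible.induct) auto

lemma compatible_steps: "compatible p \<sigma> \<Longrightarrow> set p \<subseteq> {-1, 0, 1}"
  by (induction p \<sigma> rule: compatible.induct) auto

lemma compatible_append:
  assumes "length \<sigma>\<^sub>1 = length p\<^sub>1 + 1"
  shows "compatible (p\<^sub>1 @ d # p\<^sub>2) (\<sigma>\<^sub>1 @ \<sigma>\<^sub>2) \<longleftrightarrow>
    compatible p\<^sub>1 \<sigma>\<^sub>1 \<and> compatible p\<^sub>2 \<sigma>\<^sub>2 \<and> d \<in> {-1, 0, 1} \<and>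
    (d = -1 \<longrightarrow> last \<sigma>\<^sub>1 < hd \<sigma>\<^sub>2) \<and> (d = 1 \<longrightarrow> hd \<sigma>\<^sub>2 < last \<sigma>\<^sub>1)"
  using assms
proof (induction p\<^sub>1 arbitrary: \<sigma>\<^sub>1)
  case Nil
  then obtain x where "\<sigma>\<^sub>1 = [x]" by (cases \<sigma>\<^sub>1) auto
  then show ?case by (cases \<sigma>\<^sub>2) auto
next
  case (Cons e p\<^sub>1)
  then obtain x y \<tau> where \<sigma>\<^sub>1: "\<sigma>\<^sub>1 = x # y # \<tau>"
    by (cases \<sigma>\<^sub>1; cases "tl \<sigma>\<^sub>1") auto
  have "compatible (p\<^sub>1 @ d # p\<^sub>2) ((y # \<tau>) @ \<sigma>\<^sub>2) \<longleftrightarrow>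
    compatible p\<^sub>1 (y # \<tau>) \<and> compatible p\<^sub>2 \<sigma>\<^sub>2 \<and> d \<in> {-1, 0, 1} \<and>
    (d = -1 \<longrightarrow> last (y # \<tau>) < hd \<sigma>\<^sub>2) \<and> (d = 1 \<longrightarrow> hd \<sigma>\<^sub>2 < last (y # \<tau>))"
    using Cons \<sigma>\<^sub>1 by (simp del: append_Cons)
  then show ?case using \<sigma>\<^sub>1 by (simp add: last_ConsR del: last.simps)
qed

lemma compatible_rev: "compatible p \<sigma> \<Longrightarrow> compatible (map uminus (rev p)) (rev \<sigma>)"
proof (induction p \<sigma> rule: compatible.induct)
  case (2 d p x y \<sigma>)
  have "length (rev (y # \<sigma>)) = length (map uminus (rev p)) + 1"
    using compatible_length[of p "y # \<sigma>"] 2 by simp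
  from compatible_append[OF this, of "-d" "[]" "[x]"] show ?case using 2 by auto
qed auto

lemma compatible_map_mono:
  "strict_mono_on (set \<sigma>) g \<Longrightarrow> compatible p \<sigma> \<Longrightarrow> compatible p (map g \<sigma>)"
  by (induction p \<sigma> rule: compatible.induct) (auto simp: strict_mono_on_def)

lemma compatible_iff_nth:
  "compatible p \<sigma> \<longleftrightarrow> 1 \<le> length \<sigma> \<and> length p = length \<sigma> - 1 \<and> set p \<subseteq> {-1, 0, 1} \<and>
     (\<forall>i < length p. (p ! i = -1 \<longrightarrow> \<sigma> ! i < \<sigma> ! (i + 1)) \<and> (p ! i = 1 \<longrightarrow> \<sigma> ! i > \<sigma> ! (i + 1)))"
  by (induction p \<sigma> rule: compatible.induct) (auto simp: All_less_Suc2)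

lemma nonneg_from_append [simp]:
  "nonneg_from h (p @ q) \<longleftrightarrow> nonneg_from h p \<and> nonneg_from (h + sum_list p) q"
  by (induction p arbitrary: h) (auto simp: add.assoc)

lemma nonneg_from_mono: "nonneg_from h p \<Longrightarrow> h \<le> h' \<Longrightarrow> nonneg_from h' p"
  by (induction p arbitrary: h h') fastforce+

lemma nonneg_from_sum_list: "nonneg_from h p \<Longrightarrow> 0 \<le> h \<Longrightarrow> 0 \<le> h + sum_list p"
proof (induction p arbitrary: h)
  case (Cons d p)
  then have "0 \<le> (h + d) + sum_list p" by simp
  then show ?case by (simp add: add.assoc)
qed simp

lemma nonneg_from_psum: "nonneg_from h p \<Longrightarrow> 0 \<le> h \<Longrightarrow> 0 \<le> h + psum p j"
  using nonneg_from_sum_list[of h "take j p"] nonneg_from_append[of h "take j p" "drop j p"]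
  by (simp add: psum_def)

lemma nonneg_from_iff_psum: "nonneg_from h p \<longleftrightarrow> (\<forall>j \<in> {1..length p}. 0 \<le> h + psum p j)"
proof (induction p arbitrary: h)
  case (Cons d p)
  have Icc_Suc: "{1..Suc n} = insert 1 (Suc ` {1..n})" for n :: nat
    by (auto simp: image_Suc_atLeastAtMost)
  have "(\<forall>j \<in> {1..length (d # p)}. 0 \<le> h + psum (d # p) j) \<longleftrightarrow>
      0 \<le> h + psum (d # p) 1 \<and> (\<forall>j \<in> {1..length p}. 0 \<le> h + psum (d # p) (Suc j))"
    unfolding length_Cons Icc_Suc by blast
  also have "\<dots> \<longleftrightarrow> 0 \<le> h + d \<and> (\<forall>j \<in> {1..length p}. 0 \<le> (h + d) + psum p j)"
    by (simp add: psum_def add.assoc)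
  finally show ?case using Cons by simp
qed simp

lemma excursion_Nil [simp]: "excursion []"
  by (simp add: excursion_def)

lemma sum_list_map_uminus [simp]:
  fixes xs :: "'a::ab_group_add list"
  shows "sum_list (map uminus xs) = - sum_list xs"
  by (induction xs) auto

lemma nonneg_from_rev:
  "nonneg_from h a \<Longrightarrow> 0 \<le> h \<Longrightarrow> nonneg_from (h + sum_list a) (map uminus (rev a))"
proof (induction a arbitrary: h)
  case (Cons d a)
  then have "nonneg_from (h + d + sum_list a) (map uminus (rev a))" by simp
  then show ?case using Cons by (simp add: add.assoc)
qed simp

lemma excursion_rev: "excursion a \<Longrightarrow> excursion (map uminus (rev a))"
  using nonneg_from_rev[of 0 a] by (simp add: excursion_def)

lemma map_uminus_rev_involutive [simp]: "map uminus (rev (map uminus (rev p))) = (p :: int list)"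
  by (simp add: rev_map comp_def)

lemma map_uminus_rev_inj: "map uminus (rev a) = map uminus (rev b) \<Longrightarrow> a = (b :: int list)"
  by (metis map_uminus_rev_involutive)

lemma compatible_rev_iff: "compatible (map uminus (rev p)) (rev \<sigma>) \<longleftrightarrow> compatible p \<sigma>"
  using compatible_rev[of p \<sigma>] compatible_rev[of "map uminus (rev p)" "rev \<sigma>"] by auto

lemma first_descent:
  assumes "set r \<subseteq> {-1, 0, 1}" "0 \<le> h" "\<not> nonneg_from h r"
  obtains a b where "r = a @ [-1] @ b" "nonneg_from h a" "h + sum_list a = 0"
  using assms
proof (induction r arbitrary: h thesis)
  case (Cons d r)
  show ?case
  proof (cases "h = 0 \<and> d = -1")
    case True
    then show ?thesis using Cons.prems(1)[of "[]" r] by simp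
  next
    case False
    then have "0 \<le> h + d" "\<not> nonneg_from (h + d) r" using Cons.prems by auto
    then obtain a b where "r = a @ [-1] @ b" "nonneg_from (h + d) a" "h + d + sum_list a = 0"
      using Cons.IH[of "h + d"] Cons.prems(2) by auto
    then show ?thesis using Cons.prems(1)[of "d # a" b] \<open>0 \<le> h + d\<close> by (simp add: add.assoc)
  qed
qed simp

lemma excursion_or_last_rise:
  assumes "nonneg_from 0 r" "set r \<subseteq> {-1, 0, 1}"
  shows "excursion r \<or> (\<exists>a w. r = a @ [1] @ w \<and> excursion a \<and> nonneg_from 0 w)"
  using assms
proof (induction "length r" arbitrary: r rule: less_induct)
  case less
  show ?case
  proof (cases r)
    case (Cons d r')
    have "d = 0 \<or> d = 1" using less.prems Cons by auto
    then show ?thesis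
    proof
      assume "d = 0"
      then have "excursion r' \<or> (\<exists>a w. r' = a @ [1] @ w \<and> excursion a \<and> nonneg_from 0 w)"
        using less Cons by simp
      then show ?thesis
      proof (elim disjE exE conjE)
        assume "excursion r'"
        then show ?thesis using \<open>d = 0\<close> Cons by (simp add: excursion_def)
      next
        fix a w assume "r' = a @ [1] @ w" "excursion a" "nonneg_from 0 w"
        then show ?thesis using \<open>d = 0\<close> Cons
          by (intro disjI2 exI[of _ "0 # a"] exI[of _ w]) (simp add: excursion_def)
      qed
    next
      assume d: "d = 1"
      show ?thesis
      proof (cases "nonneg_from 0 r'")
        case True
        then show ?thesis using d Cons by (intro disjI2 exI[of _ "[]"] exI[of _ r']) simp
      next
        case False
        then obtain a b where ab: "r' = a @ [-1] @ b" "nonneg_from 0 a" "sum_list a = 0"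
          using first_descent[of r' 0] less.prems Cons by auto
        have "nonneg_from 0 b" "set b \<subseteq> {-1, 0, 1}" using less.prems Cons d ab by auto
        then have "excursion b \<or> (\<exists>a' w. b = a' @ [1] @ w \<and> excursion a' \<and> nonneg_from 0 w)"
          using less.hyps Cons ab by simp
        moreover have "nonneg_from 1 a" using ab(2) nonneg_from_mono by fastforce
        ultimately show ?thesis
        proof (elim disjE exE conjE)
          assume "excursion b" "nonneg_from 1 a"
          then show ?thesis using d Cons ab by (simp add: excursion_def)
        next
          fix a' w assume "b = a' @ [1] @ w" "excursion a'" "nonneg_from 0 w" "nonneg_from 1 a"
          then show ?thesis using d Cons ab
            by (intro disjI2 exI[of _ "1 # a @ [-1] @ a'"] exI[of _ w]) (simp add: excursion_def)
        qed
      qed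
    qed
  qed (simp add: excursion_def)
qed

lemma excursion_cases:
  assumes "excursion q" "set q \<subseteq> {-1, 0, 1}"
  obtains (empty) "q = []"
  | (flat) c where "q = 0 # c" "excursion c"
  | (peak) a b where "q = 1 # a @ [-1] @ b" "excursion a" "excursion b"
proof (cases q)
  case (Cons d r)
  have "d = 0 \<or> d = 1" using assms Cons by (auto simp: excursion_def)
  then show ?thesis
  proof
    assume "d = 0"
    then show ?thesis using that(2) assms Cons by (simp add: excursion_def)
  next
    assume d: "d = 1"
    then have "nonneg_from 1 r" "sum_list r = -1" using assms Cons by (auto simp: excursion_def)
    moreover have "\<not> nonneg_from 0 r" using nonneg_from_sum_list[of 0 r] calculation by auto
    moreover have "set r \<subseteq> {-1, 0, 1}" using assms Cons by auto
    ultimately obtain a b where "r = a @ [-1] @ b" "nonneg_from 0 a" "sum_list a = 0"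
      using first_descent[of r 0] by auto
    then show ?thesis using that(3) Cons d \<open>nonneg_from 1 r\<close> \<open>sum_list r = -1\<close>
      by (simp add: excursion_def)
  qed
qed (use that in simp)

lemma excursion_peak_iff: "excursion a \<Longrightarrow> excursion (1 # a @ [-1] @ b) \<longleftrightarrow> excursion b"
  using nonneg_from_mono[of 0 a 1] by (auto simp: excursion_def)

lemma not_excursion_split:
  assumes "excursion a" "d \<in> {-1, 1}" "nonneg_from 0 w"
  shows "\<not> excursion (a @ [d] @ w)"
  using assms nonneg_from_sum_list[of 0 w] by (auto simp: excursion_def)

lemma nonneg_walk_cases:
  assumes "nonneg_from 0 p" "set p \<subseteq> {-1, 0, 1}"
  obtains (empty) "p = []"
  | (flat) c where "p = 0 # c" "nonneg_from 0 c"
  | (marked_root) a where "p = 1 # a" "excursion a"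
  | (split) a d w where "p = 1 # a @ [d] @ w" "excursion a" "d \<in> {-1, 1}" "nonneg_from 0 w"
proof (cases p)
  case (Cons e r)
  have r: "set r \<subseteq> {-1, 0, 1}" using assms Cons by auto
  have "e = 0 \<or> e = 1" using assms Cons by auto
  then show ?thesis
  proof
    assume "e = 0"
    then show ?thesis using that(2) assms Cons by simp
  next
    assume e: "e = 1"
    then have pos1: "nonneg_from 1 r" using assms Cons by simp
    show ?thesis
    proof (cases "nonneg_from 0 r")
      case True
      then show ?thesis
        using excursion_or_last_rise[OF True r] that(3,4) Cons e by auto
    next
      case False
      then obtain a w where "r = a @ [-1] @ w" "nonneg_from 0 a" "sum_list a = 0"
        using first_descent[OF r order.refl False] by auto
      then show ?thesis using that(4)[of a "-1" w] pos1 Cons e by (simp add: excursion_def)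
    qed
  qed
qed (use that in simp)

text \<open>Counterparts of \<open>motzkin_path\<close> and \<open>positive_path\<close> whose labels are arbitrary distinct
  numbers rather than a permutation of \<open>[n]\<close>; they are closed under taking factors.\<close>

definition motzkin_labelled :: "int list \<Rightarrow> nat list \<Rightarrow> bool" where
  "motzkin_labelled p \<sigma> \<longleftrightarrow> compatible p \<sigma> \<and> distinct \<sigma> \<and> (\<exists>q. p = q @ [-1] \<and> excursion q)"

definition positive_labelled :: "int list \<Rightarrow> nat list \<Rightarrow> bool" where
  "positive_labelled p \<sigma> \<longleftrightarrow> compatible p \<sigma> \<and> distinct \<sigma> \<and> nonneg_from 0 p"

lemma positive_path_iff:
  assumes "1 \<le> n"
  shows "positive_path n p \<sigma> \<longleftrightarrow> positive_labelled p \<sigma> \<and> set \<sigma> = {1..n}"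
proof
  assume P: "positive_path n p \<sigma>"
  then have "compatible p \<sigma>" using assms
    by (auto simp: positive_path_def well_labelled_def compatible_iff_nth)
  moreover have "nonneg_from 0 p" using P
    by (auto simp: positive_path_def well_labelled_def nonneg_from_iff_psum)
  ultimately show "positive_labelled p \<sigma> \<and> set \<sigma> = {1..n}"
    using P by (auto simp: positive_labelled_def positive_path_def well_labelled_def)
next
  assume P: "positive_labelled p \<sigma> \<and> set \<sigma> = {1..n}"
  then have len: "length \<sigma> = n" using distinct_card[of \<sigma>] by (auto simp: positive_labelled_def)
  have "compatible p \<sigma>" "distinct \<sigma>" "nonneg_from 0 p" using P by (auto simp: positive_labelled_def)
  moreover have "length p = n - 1" using compatible_length calculation(1) len by fastforce
  ultimately show "positive_path n p \<sigma>" using P len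
    unfolding positive_path_def well_labelled_def compatible_iff_nth nonneg_from_iff_psum by auto
qed

lemma motzkin_labelled_shape:
  assumes "motzkin_labelled p \<sigma>"
  obtains (base) x y where "p = [-1]" "\<sigma> = [x, y]"
  | (flat) c x \<tau> where "p = 0 # c @ [-1]" "excursion c" "\<sigma> = x # \<tau>"
  | (peak) a b \<sigma>\<^sub>1 \<sigma>\<^sub>2 where "p = 1 # a @ [-1] @ b @ [-1]" "excursion a" "excursion b"
      "\<sigma> = rev \<sigma>\<^sub>1 @ \<sigma>\<^sub>2" "length \<sigma>\<^sub>1 = length a + 2" "length \<sigma>\<^sub>2 = length b + 2"
proof -
  obtain q where q: "p = q @ [-1]" "excursion q" and comp: "compatible p \<sigma>"
    using assms by (auto simp: motzkin_labelled_def)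
  have len: "length \<sigma> = length q + 2" using compatible_length[OF comp] q by simp
  have "set q \<subseteq> {-1, 0, 1}" using compatible_steps[OF comp] q by auto
  with q(2) show thesis
  proof (cases rule: excursion_cases)
    case empty
    then have "length \<sigma> = 2" using len by simp
    then obtain x y where "\<sigma> = [x, y]" by (auto simp: numeral_2_eq_2 length_Suc_conv)
    then show thesis using base q empty by simp
  next
    case (flat c)
    then show thesis using that(2) q len by (cases \<sigma>) auto
  next
    case (peak a b)
    then show thesis
      using that(3)[of a b "rev (take (length a + 2) \<sigma>)" "drop (length a + 2) \<sigma>"] q len by simp
  qed
qed

lemma motzkin_labelled_snoc_iff:
  "motzkin_labelled (q @ [-1]) \<sigma> \<longleftrightarrow> compatible (q @ [-1]) \<sigma> \<and> distinct \<sigma> \<and> excursion q"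
  by (simp add: motzkin_labelled_def)

lemma motzkin_labelled_base_iff: "motzkin_labelled [-1] [x, y] \<longleftrightarrow> x < y"
  using motzkin_labelled_snoc_iff[of "[]"] by auto

lemma motzkin_labelled_flat_iff:
  "motzkin_labelled (0 # c @ [-1]) (x # \<tau>) \<longleftrightarrow> motzkin_labelled (c @ [-1]) \<tau> \<and> x \<notin> set \<tau>"
  using motzkin_labelled_snoc_iff[of "0 # c"] motzkin_labelled_snoc_iff[of c]
  by (cases \<tau>) (auto simp: excursion_def)

lemma compatible_peak_iff:
  assumes "length \<sigma>\<^sub>1 = length a + 2"
  shows "compatible (1 # a @ [d] @ w) (rev \<sigma>\<^sub>1 @ \<sigma>\<^sub>2) \<longleftrightarrow>
    compatible (map uminus (rev a) @ [-1]) \<sigma>\<^sub>1 \<and> compatible w \<sigma>\<^sub>2 \<and> d \<in> {-1, 0, 1} \<and>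
    (d = -1 \<longrightarrow> hd \<sigma>\<^sub>1 < hd \<sigma>\<^sub>2) \<and> (d = 1 \<longrightarrow> hd \<sigma>\<^sub>2 < hd \<sigma>\<^sub>1)"
proof -
  have "length (rev \<sigma>\<^sub>1) = length (1 # a) + 1" "\<sigma>\<^sub>1 \<noteq> []" using assms by auto
  from compatible_append[OF this(1), of d w \<sigma>\<^sub>2] this(2) show ?thesis
    using compatible_rev_iff[of "1 # a" "rev \<sigma>\<^sub>1"] by (simp add: last_rev)
qed

lemma motzkin_labelled_peak_iff:
  assumes "excursion a" "length \<sigma>\<^sub>1 = length a + 2"
  shows "motzkin_labelled (1 # a @ [-1] @ b @ [-1]) (rev \<sigma>\<^sub>1 @ \<sigma>\<^sub>2) \<longleftrightarrow>
    motzkin_labelled (map uminus (rev a) @ [-1]) \<sigma>\<^sub>1 \<and> motzkin_labelled (b @ [-1]) \<sigma>\<^sub>2 \<and>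
    hd \<sigma>\<^sub>1 < hd \<sigma>\<^sub>2 \<and> set \<sigma>\<^sub>1 \<inter> set \<sigma>\<^sub>2 = {}"
proof -
  have p: "1 # a @ [-1] @ b @ [-1] = (1 # a @ [-1] @ b) @ [-1]" by simp
  show ?thesis
    unfolding p motzkin_labelled_snoc_iff excursion_peak_iff[OF assms(1)]
    using compatible_peak_iff[OF assms(2), of "-1" "b @ [-1]"] excursion_rev[OF assms(1)]
    by auto
qed

lemma positive_labelled_leaf [simp]: "positive_labelled [] [x]"
  by (simp add: positive_labelled_def)

lemma positive_labelled_flat_iff:
  "positive_labelled (0 # c) (x # \<tau>) \<longleftrightarrow> positive_labelled c \<tau> \<and> x \<notin> set \<tau>"
  by (cases \<tau>) (auto simp: positive_labelled_def)

lemma positive_labelled_marked_root_iff: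
  assumes "excursion a"
  shows "positive_labelled (1 # a) \<sigma> \<longleftrightarrow> motzkin_labelled (map uminus (rev a) @ [-1]) (rev \<sigma>)"
proof -
  have "nonneg_from 0 (1 # a)" using assms nonneg_from_mono[of 0 a 1] by (simp add: excursion_def)
  then show ?thesis
    using motzkin_labelled_snoc_iff[of "map uminus (rev a)"] compatible_rev_iff[of "1 # a" \<sigma>]
      excursion_rev[OF assms] by (simp add: positive_labelled_def)
qed

lemma positive_labelled_split_iff:
  assumes "excursion a" "d \<in> {-1, 1}" "nonneg_from 0 w" "length \<sigma>\<^sub>1 = length a + 2"
  shows "positive_labelled (1 # a @ [d] @ w) (rev \<sigma>\<^sub>1 @ \<sigma>\<^sub>2) \<longleftrightarrow>
    motzkin_labelled (map uminus (rev a) @ [-1]) \<sigma>\<^sub>1 \<and> positive_labelled w \<sigma>\<^sub>2 \<and>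
    (d = -1 \<longleftrightarrow> hd \<sigma>\<^sub>1 < hd \<sigma>\<^sub>2) \<and> set \<sigma>\<^sub>1 \<inter> set \<sigma>\<^sub>2 = {}"
proof -
  have "nonneg_from 0 (1 # a @ [d] @ w)"
    using assms nonneg_from_mono[of 0 a 1] nonneg_from_mono[of 0 w "1 + d"] by (auto simp: excursion_def)
  moreover have "hd \<sigma>\<^sub>1 \<noteq> hd \<sigma>\<^sub>2" if "compatible w \<sigma>\<^sub>2" "set \<sigma>\<^sub>1 \<inter> set \<sigma>\<^sub>2 = {}"
  proof -
    have "\<sigma>\<^sub>1 \<noteq> []" "\<sigma>\<^sub>2 \<noteq> []" using assms(4) compatible_length[OF that(1)] by auto
    then show ?thesis using that(2) by (metis disjoint_iff list.set_sel(1))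
  qed
  ultimately show ?thesis
    unfolding positive_labelled_def motzkin_labelled_snoc_iff compatible_peak_iff[OF assms(4)]
    using excursion_rev[OF assms(1)] assms(2,3) by auto
qed

lemma positive_labelled_shape:
  assumes "positive_labelled p \<sigma>"
  obtains (leaf) x where "p = []" "\<sigma> = [x]"
  | (flat) c x \<tau> where "p = 0 # c" "nonneg_from 0 c" "\<sigma> = x # \<tau>"
  | (marked_root) a where "p = 1 # a" "excursion a" "length \<sigma> = length a + 2"
  | (split) a d w \<sigma>\<^sub>1 \<sigma>\<^sub>2 where "p = 1 # a @ [d] @ w" "excursion a" "d \<in> {-1, 1}" "nonneg_from 0 w"
      "\<sigma> = rev \<sigma>\<^sub>1 @ \<sigma>\<^sub>2" "length \<sigma>\<^sub>1 = length a + 2" "length \<sigma>\<^sub>2 = length w + 1"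
proof -
  have comp: "compatible p \<sigma>" and "nonneg_from 0 p"
    using assms by (auto simp: positive_labelled_def)
  moreover have "set p \<subseteq> {-1, 0, 1}" using compatible_steps[OF comp] .
  ultimately have "nonneg_from 0 p" "set p \<subseteq> {-1, 0, 1}" by simp_all
  then show thesis
  proof (cases rule: nonneg_walk_cases)
    case empty
    then show thesis using that(1) compatible_length[OF comp] by (cases \<sigma>) auto
  next
    case (flat c)
    then show thesis using that(2) compatible_length[OF comp] by (cases \<sigma>) auto
  next
    case (marked_root a)
    then show thesis using that(3) compatible_length[OF comp] by simp
  next
    case (split a d w)
    then show thesis
      using that(4)[of a d w "rev (take (length a + 2) \<sigma>)" "drop (length a + 2) \<sigma>"]
        compatible_length[OF comp] by simp
  qed
qed

lemma psum_Cons_Suc: "psum (d # p) (Suc j) = d + psum p j"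
  by (simp add: psum_def)

lemma psum_append: "psum (p @ q) j = (if j \<le> length p then psum p j else sum_list p + psum q (j - length p))"
  by (simp add: psum_def)

lemma Least_return_peak:
  assumes "excursion a"
  shows "(LEAST k. 1 \<le> k \<and> psum (1 # a @ [-1] @ w) k = 0) = length a + 2"
proof (rule Least_equality)
  show "1 \<le> length a + 2 \<and> psum (1 # a @ [-1] @ w) (length a + 2) = 0"
    using assms by (simp add: psum_def excursion_def)
next
  fix k assume k: "1 \<le> k \<and> psum (1 # a @ [-1] @ w) k = 0"
  show "length a + 2 \<le> k"
  proof (rule ccontr)
    assume "\<not> length a + 2 \<le> k"
    then obtain i where "k = Suc i" "i \<le> length a" using k by (cases k) auto
    then have "psum (1 # a @ [-1] @ w) k = 1 + psum a i" by (simp add: psum_Cons_Suc psum_append)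
    moreover have "0 \<le> psum a i" using nonneg_from_psum[of 0 a i] assms by (simp add: excursion_def)
    ultimately show False using k by simp
  qed
qed

definition phi'_cut :: "int list \<Rightarrow> nat \<Rightarrow> nat \<Rightarrow> bool" where
  "phi'_cut p n k \<longleftrightarrow> k \<le> n \<and> (\<forall>j. 2 \<le> j \<and> j \<le> k - 1 \<longrightarrow> psum p (j - 1) \<ge> 1) \<and> psum p (k - 1) = 1"

lemma phi'_cut_excursion:
  assumes "excursion a" "length a + 2 \<le> n"
  shows "phi'_cut (1 # a @ w) n (length a + 2)"
  unfolding phi'_cut_def
proof (intro conjI allI impI)
  fix j assume j: "2 \<le> j \<and> j \<le> length a + 2 - 1"
  then obtain i where i: "j - 1 = Suc i" "i \<le> length a" by (cases "j - 1") auto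
  then have "psum (1 # a @ w) (j - 1) = 1 + psum a i" by (simp add: psum_Cons_Suc psum_append)
  moreover have "0 \<le> psum a i" using nonneg_from_psum[of 0 a i] assms by (simp add: excursion_def)
  ultimately show "1 \<le> psum (1 # a @ w) (j - 1)" by simp
qed (use assms in \<open>simp_all add: psum_def excursion_def\<close>)

lemma Greatest_phi'_cut_marked_root:
  "excursion a \<Longrightarrow> (GREATEST k. phi'_cut (1 # a) (length a + 2) k) = length a + 2"
  using phi'_cut_excursion[of a "length a + 2" "[]"]
  by (intro Greatest_equality) (auto simp: phi'_cut_def)

lemma Greatest_phi'_cut_split:
  assumes "excursion a" "d \<in> {-1, 1}" "nonneg_from 0 w" "n = length a + length w + 3"
  shows "(GREATEST k. phi'_cut (1 # a @ [d] @ w) n k) = length a + 2"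
proof (rule Greatest_equality)
  show "phi'_cut (1 # a @ [d] @ w) n (length a + 2)"
    using phi'_cut_excursion[OF assms(1), of n "[d] @ w"] assms(4) by simp
next
  fix k assume k: "phi'_cut (1 # a @ [d] @ w) n k"
  have sa: "sum_list a = 0" using assms by (simp add: excursion_def)
  show "k \<le> length a + 2"
  proof (rule ccontr)
    assume gt: "\<not> k \<le> length a + 2"
    show False
    proof (cases "d = -1")
      case True
      \<comment> \<open>the walk is back at height 0 right after the cut\<close>
      then have "psum (1 # a @ [d] @ w) (length a + 2) = 0" using sa by (simp add: psum_def)
      moreover have "length a + 2 = k - 1 \<or> 2 \<le> length a + 3 \<and> length a + 3 \<le> k - 1" using gt by auto
      ultimately show False using k unfolding phi'_cut_def by fastforce
    next
      case False
      then have "d = 1" using assms by auto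
      obtain i where i: "k - 1 = length a + 2 + i" using gt by (intro that[of "k - 1 - (length a + 2)"]) simp
      have "psum (1 # a @ [d] @ w) (k - 1) = 2 + psum w i"
        using i sa \<open>d = 1\<close> by (simp add: psum_def)
      moreover have "0 \<le> psum w i" using nonneg_from_psum[of 0 w i] assms by simp
      ultimately show False using k unfolding phi'_cut_def by simp
    qed
  qed
qed

function motzkin_tree :: "int list \<Rightarrow> nat list \<Rightarrow> ltree" where
  "motzkin_tree p \<sigma> = (let n = length \<sigma> in
     if n \<le> 2 then Node False (Leaf False (min (\<sigma> ! 0) (\<sigma> ! 1))) (Leaf False (max (\<sigma> ! 0) (\<sigma> ! 1)))
     else if hd p = 0 then Node False (Leaf False (hd \<sigma>)) (motzkin_tree (tl p) (tl \<sigma>))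
     else if hd p = 1 then
       (let k = (LEAST k. 1 \<le> k \<and> psum p k = 0) in
        if 1 \<le> k \<and> k < n then
          Node False (motzkin_tree (map uminus (rev (take (k - 1) p))) (rev (take k \<sigma>)))
            (motzkin_tree (drop k p) (drop k \<sigma>))
        else Leaf False 0)
     else Leaf False 0)"
  by pat_completeness auto
termination
  by (relation "measure (\<lambda>(p, \<sigma>). length \<sigma>)") (auto simp: Let_def)

function positive_tree :: "int list \<Rightarrow> nat list \<Rightarrow> ltree" where
  "positive_tree p \<sigma> = (let n = length \<sigma> in
     if n \<le> 1 then Leaf True (hd \<sigma>)
     else if hd p = 0 then Node False (Leaf False (hd \<sigma>)) (positive_tree (tl p) (tl \<sigma>))
     else if hd p = 1 then
       (let k = (GREATEST k. phi'_cut p n k);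
            p\<^sub>1 = map uminus (rev (take (k - 1) p)); \<sigma>\<^sub>1 = rev (take k \<sigma>) in
        if k = n then mark_root (motzkin_tree p\<^sub>1 \<sigma>\<^sub>1)
        else if 1 \<le> k \<and> k < n then
          Node False (motzkin_tree p\<^sub>1 \<sigma>\<^sub>1) (positive_tree (drop k p) (drop k \<sigma>))
        else Leaf False 0)
     else Leaf False 0)"
  by pat_completeness auto
termination
  by (relation "measure (\<lambda>(p, \<sigma>). length \<sigma>)")
    (auto simp: Let_def simp del: One_nat_def intro: diff_less_aux)

declare motzkin_tree.simps [simp del] positive_tree.simps [simp del]
  phi.simps [simp del] phi'.simps [simp del]

lemma motzkin_tree_base:
  "motzkin_tree [-1] [x, y] = Node False (Leaf False (min x y)) (Leaf False (max x y))"
  by (subst motzkin_tree.simps) simp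

lemma motzkin_tree_flat:
  "length \<tau> = length c + 2 \<Longrightarrow>
   motzkin_tree (0 # c @ [-1]) (x # \<tau>) = Node False (Leaf False x) (motzkin_tree (c @ [-1]) \<tau>)"
  by (subst motzkin_tree.simps) (simp add: Let_def)

lemma motzkin_tree_peak:
  assumes "excursion a" "length \<sigma>\<^sub>1 = length a + 2" "length \<sigma>\<^sub>2 = length b + 2"
  shows "motzkin_tree (1 # a @ [-1] @ b @ [-1]) (rev \<sigma>\<^sub>1 @ \<sigma>\<^sub>2) =
    Node False (motzkin_tree (map uminus (rev a) @ [-1]) \<sigma>\<^sub>1) (motzkin_tree (b @ [-1]) \<sigma>\<^sub>2)"
  using Least_return_peak[OF assms(1), of "b @ [-1]"] assms(2,3)
  by (subst motzkin_tree.simps) (simp add: Let_def)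

lemma positive_tree_leaf: "positive_tree p [x] = Leaf True x"
  by (subst positive_tree.simps) simp

lemma positive_tree_flat:
  "length \<tau> = length c + 1 \<Longrightarrow>
   positive_tree (0 # c) (x # \<tau>) = Node False (Leaf False x) (positive_tree c \<tau>)"
  by (subst positive_tree.simps) (simp add: Let_def)

lemma positive_tree_marked_root:
  assumes "excursion a" "length \<sigma> = length a + 2"
  shows "positive_tree (1 # a) \<sigma> = mark_root (motzkin_tree (map uminus (rev a) @ [-1]) (rev \<sigma>))"
  using Greatest_phi'_cut_marked_root[OF assms(1)] assms(2)
  by (subst positive_tree.simps) (simp add: Let_def)

lemma positive_tree_split:
  assumes "excursion a" "d \<in> {-1, 1}" "nonneg_from 0 w"
    "length \<sigma>\<^sub>1 = length a + 2" "length \<sigma>\<^sub>2 = length w + 1"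
  shows "positive_tree (1 # a @ [d] @ w) (rev \<sigma>\<^sub>1 @ \<sigma>\<^sub>2) =
    Node False (motzkin_tree (map uminus (rev a) @ [-1]) \<sigma>\<^sub>1) (positive_tree w \<sigma>\<^sub>2)"
proof -
  have "(GREATEST k. phi'_cut (1 # a @ [d] @ w) (length (rev \<sigma>\<^sub>1 @ \<sigma>\<^sub>2)) k) = length a + 2"
    using assms by (intro Greatest_phi'_cut_split) simp_all
  then show ?thesis
    using assms(4,5) by (subst positive_tree.simps) (simp only: Let_def, simp)
qed

lemma phi_base: "phi [-1] [x, y] = Node False (Leaf False 1) (Leaf False 2)"
  by (subst phi.simps) simp

lemma phi_flat:
  "length \<tau> = length c + 2 \<Longrightarrow>
   phi (0 # c @ [-1]) (x # \<tau>) = Node False (Leaf False x)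
     (relabel (lam ({1..length \<tau> + 1} - {x})) (phi (c @ [-1]) (map (laminv ({1..length \<tau> + 1} - {x})) \<tau>)))"
  by (subst phi.simps) (simp add: Let_def)

lemma phi_peak:
  assumes "excursion a" "length \<sigma>\<^sub>1 = length a + 2" "length \<sigma>\<^sub>2 = length b + 2"
  shows "phi (1 # a @ [-1] @ b @ [-1]) (rev \<sigma>\<^sub>1 @ \<sigma>\<^sub>2) = Node False
    (relabel (lam (set \<sigma>\<^sub>1)) (phi (map uminus (rev a) @ [-1]) (map (laminv (set \<sigma>\<^sub>1)) \<sigma>\<^sub>1)))
    (relabel (lam (set \<sigma>\<^sub>2)) (phi (b @ [-1]) (map (laminv (set \<sigma>\<^sub>2)) \<sigma>\<^sub>2)))"
  using Least_return_peak[OF assms(1), of "b @ [-1]"] assms(2,3)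
  by (subst phi.simps) (simp add: Let_def)

lemma phi'_leaf: "phi' p [x] = Leaf True x"
  by (subst phi'.simps) simp

lemma phi'_flat:
  "length \<tau> = length c + 1 \<Longrightarrow>
   phi' (0 # c) (x # \<tau>) = Node False (Leaf False x)
     (relabel (lam ({1..length \<tau> + 1} - {x})) (phi' c (map (laminv ({1..length \<tau> + 1} - {x})) \<tau>)))"
  by (subst phi'.simps) (simp add: Let_def)

lemma phi'_marked_root:
  assumes "excursion a" "length \<sigma> = length a + 2"
  shows "phi' (1 # a) \<sigma> =
    mark_root (phi (map uminus (rev a) @ [-1]) (map (laminv (set \<sigma>)) (rev \<sigma>)))"
  using Greatest_phi'_cut_marked_root[OF assms(1)] assms(2)
  by (subst phi'.simps) (simp add: Let_def phi'_cut_def)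

lemma phi'_split:
  assumes "excursion a" "d \<in> {-1, 1}" "nonneg_from 0 w"
    "length \<sigma>\<^sub>1 = length a + 2" "length \<sigma>\<^sub>2 = length w + 1"
  shows "phi' (1 # a @ [d] @ w) (rev \<sigma>\<^sub>1 @ \<sigma>\<^sub>2) = Node False
    (relabel (lam (set \<sigma>\<^sub>1)) (phi (map uminus (rev a) @ [-1]) (map (laminv (set \<sigma>\<^sub>1)) \<sigma>\<^sub>1)))
    (relabel (lam (set \<sigma>\<^sub>2)) (phi' w (map (laminv (set \<sigma>\<^sub>2)) \<sigma>\<^sub>2)))"
proof -
  have "(GREATEST k. phi'_cut (1 # a @ [d] @ w) (length (rev \<sigma>\<^sub>1 @ \<sigma>\<^sub>2)) k) = length a + 2"
    using assms by (intro Greatest_phi'_cut_split) simp_all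
  then show ?thesis
    using assms(4,5) unfolding phi'_cut_def by (subst phi'.simps) (simp only: Let_def, simp)
qed

lemma motzkin_labelled_cases [consumes 1, case_names base flat peak]:
  assumes "motzkin_labelled p \<sigma>"
  obtains (base) x y where "p = [-1]" "\<sigma> = [x, y]" "x < y"
  | (flat) c x \<tau> where "p = 0 # c @ [-1]" "\<sigma> = x # \<tau>" "excursion c" "length \<tau> = length c + 2"
      "motzkin_labelled (c @ [-1]) \<tau>" "x \<notin> set \<tau>"
  | (peak) a b \<sigma>\<^sub>1 \<sigma>\<^sub>2 where "p = 1 # a @ [-1] @ b @ [-1]" "\<sigma> = rev \<sigma>\<^sub>1 @ \<sigma>\<^sub>2"
      "excursion a" "excursion b" "length \<sigma>\<^sub>1 = length a + 2" "length \<sigma>\<^sub>2 = length b + 2"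
      "motzkin_labelled (map uminus (rev a) @ [-1]) \<sigma>\<^sub>1" "motzkin_labelled (b @ [-1]) \<sigma>\<^sub>2"
      "hd \<sigma>\<^sub>1 < hd \<sigma>\<^sub>2" "set \<sigma>\<^sub>1 \<inter> set \<sigma>\<^sub>2 = {}"
  using assms
proof (cases rule: motzkin_labelled_shape)
  case (base x y)
  then show thesis using that(1) assms motzkin_labelled_base_iff by simp
next
  case (flat c x \<tau>)
  then have "motzkin_labelled (c @ [-1]) \<tau>" "x \<notin> set \<tau>"
    using assms motzkin_labelled_flat_iff by auto
  moreover have "length \<tau> = length c + 2"
    using compatible_length[of "c @ [-1]" \<tau>] calculation(1) by (simp add: motzkin_labelled_def)
  ultimately show thesis using that(2) flat by simp
next
  case (peak a b \<sigma>\<^sub>1 \<sigma>\<^sub>2)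
  then show thesis using that(3) assms motzkin_labelled_peak_iff[of a \<sigma>\<^sub>1 b \<sigma>\<^sub>2] by simp
qed

lemma motzkin_labelled_induct [consumes 1, case_names base flat peak]:
  assumes "motzkin_labelled p \<sigma>"
    and "\<And>x y. x < y \<Longrightarrow> P [-1] [x, y]"
    and "\<And>c x \<tau>. excursion c \<Longrightarrow> length \<tau> = length c + 2 \<Longrightarrow>
      motzkin_labelled (c @ [-1]) \<tau> \<Longrightarrow> x \<notin> set \<tau> \<Longrightarrow> P (c @ [-1]) \<tau> \<Longrightarrow> P (0 # c @ [-1]) (x # \<tau>)"
    and "\<And>a b \<sigma>\<^sub>1 \<sigma>\<^sub>2. excursion a \<Longrightarrow> excursion b \<Longrightarrow>
      length \<sigma>\<^sub>1 = length a + 2 \<Longrightarrow> length \<sigma>\<^sub>2 = length b + 2 \<Longrightarrow>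
      motzkin_labelled (map uminus (rev a) @ [-1]) \<sigma>\<^sub>1 \<Longrightarrow> motzkin_labelled (b @ [-1]) \<sigma>\<^sub>2 \<Longrightarrow>
      hd \<sigma>\<^sub>1 < hd \<sigma>\<^sub>2 \<Longrightarrow> set \<sigma>\<^sub>1 \<inter> set \<sigma>\<^sub>2 = {} \<Longrightarrow>
      P (map uminus (rev a) @ [-1]) \<sigma>\<^sub>1 \<Longrightarrow> P (b @ [-1]) \<sigma>\<^sub>2 \<Longrightarrow>
      P (1 # a @ [-1] @ b @ [-1]) (rev \<sigma>\<^sub>1 @ \<sigma>\<^sub>2)"
  shows "P p \<sigma>"
  using assms(1)
proof (induction "length \<sigma>" arbitrary: p \<sigma> rule: less_induct)
  case less
  from less.prems show ?case
  proof (cases rule: motzkin_labelled_cases)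
    case base
    then show ?thesis using assms(2) by simp
  next
    case flat
    then show ?thesis using less.hyps assms(3) by simp
  next
    case peak
    then show ?thesis using less.hyps assms(4) by simp
  qed
qed

lemma positive_labelled_cases [consumes 1, case_names leaf flat marked_root split]:
  assumes "positive_labelled p \<sigma>"
  obtains (leaf) x where "p = []" "\<sigma> = [x]"
  | (flat) c x \<tau> where "p = 0 # c" "\<sigma> = x # \<tau>" "nonneg_from 0 c" "length \<tau> = length c + 1"
      "positive_labelled c \<tau>" "x \<notin> set \<tau>"
  | (marked_root) a where "p = 1 # a" "excursion a" "length \<sigma> = length a + 2"
      "motzkin_labelled (map uminus (rev a) @ [-1]) (rev \<sigma>)"
  | (split) a d w \<sigma>\<^sub>1 \<sigma>\<^sub>2 where "p = 1 # a @ [d] @ w" "\<sigma> = rev \<sigma>\<^sub>1 @ \<sigma>\<^sub>2"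
      "excursion a" "d \<in> {-1, 1}" "nonneg_from 0 w"
      "length \<sigma>\<^sub>1 = length a + 2" "length \<sigma>\<^sub>2 = length w + 1"
      "motzkin_labelled (map uminus (rev a) @ [-1]) \<sigma>\<^sub>1" "positive_labelled w \<sigma>\<^sub>2"
      "d = -1 \<longleftrightarrow> hd \<sigma>\<^sub>1 < hd \<sigma>\<^sub>2" "set \<sigma>\<^sub>1 \<inter> set \<sigma>\<^sub>2 = {}"
  using assms
proof (cases rule: positive_labelled_shape)
  case (leaf x)
  then show thesis using that(1) by simp
next
  case (flat c x \<tau>)
  then have "positive_labelled c \<tau>" "x \<notin> set \<tau>"
    using assms positive_labelled_flat_iff by auto
  moreover have "length \<tau> = length c + 1"
    using compatible_length[of c \<tau>] calculation(1) by (simp add: positive_labelled_def)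
  ultimately show thesis using that(2) flat by simp
next
  case (marked_root a)
  then show thesis using that(3) assms positive_labelled_marked_root_iff by simp
next
  case (split a d w \<sigma>\<^sub>1 \<sigma>\<^sub>2)
  then show thesis using that(4) assms positive_labelled_split_iff[of a d w \<sigma>\<^sub>1 \<sigma>\<^sub>2] by simp
qed

lemma positive_labelled_induct [consumes 1, case_names leaf flat marked_root split]:
  assumes "positive_labelled p \<sigma>"
    and "\<And>x. P [] [x]"
    and "\<And>c x \<tau>. nonneg_from 0 c \<Longrightarrow> length \<tau> = length c + 1 \<Longrightarrow>
      positive_labelled c \<tau> \<Longrightarrow> x \<notin> set \<tau> \<Longrightarrow> P c \<tau> \<Longrightarrow> P (0 # c) (x # \<tau>)"
    and "\<And>a \<sigma>. excursion a \<Longrightarrow> length \<sigma> = length a + 2 \<Longrightarrow>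
      motzkin_labelled (map uminus (rev a) @ [-1]) (rev \<sigma>) \<Longrightarrow> P (1 # a) \<sigma>"
    and "\<And>a d w \<sigma>\<^sub>1 \<sigma>\<^sub>2. excursion a \<Longrightarrow> d \<in> {-1, 1} \<Longrightarrow> nonneg_from 0 w \<Longrightarrow>
      length \<sigma>\<^sub>1 = length a + 2 \<Longrightarrow> length \<sigma>\<^sub>2 = length w + 1 \<Longrightarrow>
      motzkin_labelled (map uminus (rev a) @ [-1]) \<sigma>\<^sub>1 \<Longrightarrow> positive_labelled w \<sigma>\<^sub>2 \<Longrightarrow>
      (d = -1 \<longleftrightarrow> hd \<sigma>\<^sub>1 < hd \<sigma>\<^sub>2) \<Longrightarrow> set \<sigma>\<^sub>1 \<inter> set \<sigma>\<^sub>2 = {} \<Longrightarrow>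
      P w \<sigma>\<^sub>2 \<Longrightarrow> P (1 # a @ [d] @ w) (rev \<sigma>\<^sub>1 @ \<sigma>\<^sub>2)"
  shows "P p \<sigma>"
  using assms(1)
proof (induction "length \<sigma>" arbitrary: p \<sigma> rule: less_induct)
  case less
  from less.prems show ?case
  proof (cases rule: positive_labelled_cases)
    case leaf
    then show ?thesis using assms(2) by simp
  next
    case flat
    then show ?thesis using less.hyps assms(3) by simp
  next
    case marked_root
    then show ?thesis using assms(4) by simp
  next
    case split
    then show ?thesis using less.hyps assms(5) by simp
  qed
qed

section \<open>Trees up to swapping children\<close>

lemma tree_eq_refl: "tree_eq t t"
  by (induction t) (auto intro: tree_eq.intros)

lemma tree_eq_sym: "tree_eq t t' \<Longrightarrow> tree_eq t' t"
  by (induction rule: tree_eq.induct) (auto intro: tree_eq.intros)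

lemma tree_eq_Leaf_iff: "tree_eq (Leaf m a) t \<longleftrightarrow> t = Leaf m a"
  by (auto elim: tree_eq.cases intro: tree_eq.intros)

lemma tree_eq_Node_iff:
  "tree_eq (Node m l r) t \<longleftrightarrow>
    (\<exists>l' r'. t = Node m l' r' \<and> (tree_eq l l' \<and> tree_eq r r' \<or> tree_eq l r' \<and> tree_eq r l'))"
  by (auto elim: tree_eq.cases intro: tree_eq.intros)

lemma tree_eq_trans: "tree_eq t t' \<Longrightarrow> tree_eq t' t'' \<Longrightarrow> tree_eq t t''"
proof (induction t t' arbitrary: t'' rule: tree_eq.induct)
  case (keep l l' r r' m)
  then show ?case by (auto simp: tree_eq_Node_iff intro: tree_eq.intros)
next
  case (swap l l' r r' m)
  then show ?case by (auto simp: tree_eq_Node_iff intro: tree_eq.intros)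
qed simp

lemma tree_eq_swap: "tree_eq (Node m l r) (Node m r l)"
  by (intro tree_eq.swap tree_eq_refl)

lemma tree_class_eq: "tree_eq t t' \<Longrightarrow> tree_class t = tree_class t'"
  unfolding tree_class_def using tree_eq_sym tree_eq_trans by blast

lemma tree_eq_nmarks: "tree_eq t t' \<Longrightarrow> nmarks t' = nmarks t"
  by (induction rule: tree_eq.induct) auto

lemma tree_eq_leaves:
  "tree_eq t t' \<Longrightarrow> set (leaves t') = set (leaves t) \<and> length (leaves t') = length (leaves t)"
  by (induction rule: tree_eq.induct) auto

fun root_mark :: "ltree \<Rightarrow> bool" where
  "root_mark (Leaf m _) = m"
| "root_mark (Node m _ _) = m"

lemma tree_eq_mark_root_iff:
  "root_mark t = root_mark t' \<Longrightarrow> tree_eq (mark_root t) (mark_root t') \<longleftrightarrow> tree_eq t t'"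
  by (cases t; cases t') (auto simp: tree_eq_Leaf_iff tree_eq_Node_iff)

fun is_leaf :: "ltree \<Rightarrow> bool" where
  "is_leaf (Leaf _ _) = True"
| "is_leaf (Node _ _ _) = False"

fun unmarked_leaf :: "ltree \<Rightarrow> bool" where
  "unmarked_leaf (Leaf m _) = (\<not> m)"
| "unmarked_leaf (Node _ _ _) = False"

text \<open>A coarse description of the root that is invariant under swapping children and takes
  different values on the different clauses of \<open>\<Phi>\<close> and \<open>\<Phi>'\<close>.\<close>

fun root_kind :: "ltree \<Rightarrow> nat" where
  "root_kind (Leaf _ _) = 4"
| "root_kind (Node m l r) = (if m then 3 else of_bool (unmarked_leaf l) + of_bool (unmarked_leaf r))"

lemma unmarked_leaf_is_leaf: "unmarked_leaf t \<Longrightarrow> is_leaf t"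
  by (cases t) auto

lemma tree_eq_is_leaf: "tree_eq t t' \<Longrightarrow> is_leaf t' = is_leaf t"
  by (cases rule: tree_eq.cases) auto

lemma tree_eq_unmarked_leaf: "tree_eq t t' \<Longrightarrow> unmarked_leaf t' = unmarked_leaf t"
  by (cases rule: tree_eq.cases) auto

lemma tree_eq_root_kind: "tree_eq t t' \<Longrightarrow> root_kind t' = root_kind t"
  by (cases rule: tree_eq.cases) (auto dest: tree_eq_unmarked_leaf)

text \<open>On the tree of a labelled Motzkin path this recovers the first and the last label of the
  path from any representative of its class.\<close>

fun path_ends :: "ltree \<Rightarrow> nat \<times> nat" where
  "path_ends (Leaf _ a) = (a, a)"
| "path_ends (Node _ l r) =
    (if is_leaf l \<and> is_leaf r then (min (fst (path_ends l)) (fst (path_ends r)), max (fst (path_ends l)) (fst (path_ends r)))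
     else if is_leaf l then (fst (path_ends l), snd (path_ends r))
     else if is_leaf r then (fst (path_ends r), snd (path_ends l))
     else if fst (path_ends l) < fst (path_ends r) then (snd (path_ends l), snd (path_ends r))
     else (snd (path_ends r), snd (path_ends l)))"

lemma path_ends_in_leaves: "fst (path_ends t) \<in> set (leaves t) \<and> snd (path_ends t) \<in> set (leaves t)"
  by (induction t) auto

lemma tree_eq_path_ends: "tree_eq t t' \<Longrightarrow> distinct (leaves t) \<Longrightarrow> path_ends t' = path_ends t"
proof (induction rule: tree_eq.induct)
  case (keep l l' r r' m)
  then show ?case using tree_eq_is_leaf[OF keep.hyps(1)] tree_eq_is_leaf[OF keep.hyps(2)] by auto
next
  case (swap l l' r r' m)
  then have "fst (path_ends l) \<noteq> fst (path_ends r)"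
    using path_ends_in_leaves[of l] path_ends_in_leaves[of r] by auto
  then show ?case
    using swap tree_eq_is_leaf[OF swap.hyps(1)] tree_eq_is_leaf[OF swap.hyps(2)] by auto
qed simp

lemma tree_eq_Node_ends_ordered:
  assumes "tree_eq (Node m A B) (Node m' A' B')" "distinct (leaves A)" "distinct (leaves B)"
    "fst (path_ends A) < fst (path_ends B)" "fst (path_ends A') < fst (path_ends B')"
  shows "tree_eq A A' \<and> tree_eq B B'"
proof -
  have "\<not> (tree_eq A B' \<and> tree_eq B A')"
    using tree_eq_path_ends[of A B'] tree_eq_path_ends[of B A'] assms(2-5) by auto
  then show ?thesis using assms(1) by (auto simp: tree_eq_Node_iff)
qed

lemma tree_eq_root_mark: "tree_eq t t' \<Longrightarrow> root_mark t' = root_mark t"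
  by (cases rule: tree_eq.cases) auto

lemma tree_eq_Node_marks_differ:
  assumes "tree_eq (Node m A B) (Node m' A' B')" "nmarks A \<noteq> nmarks B'"
  shows "tree_eq A A' \<and> tree_eq B B'"
  using assms tree_eq_nmarks[of A B'] by (auto simp: tree_eq_Node_iff)

section \<open>Motzkin paths and unmarked trees\<close>

lemma motzkin_tree_structure:
  assumes "motzkin_labelled p \<sigma>"
  shows "nmarks (motzkin_tree p \<sigma>) = 0 \<and> set (leaves (motzkin_tree p \<sigma>)) = set \<sigma> \<and>
    length (leaves (motzkin_tree p \<sigma>)) = length \<sigma> \<and>
    \<not> is_leaf (motzkin_tree p \<sigma>) \<and> \<not> root_mark (motzkin_tree p \<sigma>) \<and>
    path_ends (motzkin_tree p \<sigma>) = (hd \<sigma>, last \<sigma>)"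
  using assms
proof (induction rule: motzkin_labelled_induct)
  case (base x y)
  then show ?case by (simp add: motzkin_tree_base)
next
  case (flat c x \<tau>)
  then have "\<tau> \<noteq> []" by auto
  then show ?case using flat by (simp add: motzkin_tree_flat)
next
  case (peak a b \<sigma>\<^sub>1 \<sigma>\<^sub>2)
  then have "\<sigma>\<^sub>1 \<noteq> []" "\<sigma>\<^sub>2 \<noteq> []" by auto
  then show ?case using peak motzkin_tree_peak[OF peak(1,3,4)] by (simp add: hd_rev)
qed

lemma motzkin_tree_distinct_leaves:
  assumes "motzkin_labelled p \<sigma>"
  shows "distinct (leaves (motzkin_tree p \<sigma>))"
proof -
  have "distinct \<sigma>" using assms by (simp add: motzkin_labelled_def)
  then show ?thesis using motzkin_tree_structure[OF assms] by (metis card_distinct distinct_card)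
qed

definition motzkin_kind :: "int list \<Rightarrow> nat" where
  "motzkin_kind p = (if hd p = 1 then 0 else if hd p = 0 then 1 else 2)"

lemma root_kind_motzkin_tree:
  "motzkin_labelled p \<sigma> \<Longrightarrow> root_kind (motzkin_tree p \<sigma>) = motzkin_kind p"
proof (induction rule: motzkin_labelled_induct)
  case (base x y)
  then show ?case by (simp add: motzkin_tree_base motzkin_kind_def)
next
  case (flat c x \<tau>)
  have "\<not> is_leaf (motzkin_tree (c @ [-1]) \<tau>)" using motzkin_tree_structure[OF flat(3)] by simp
  then show ?case
    using flat(2) unmarked_leaf_is_leaf by (auto simp: motzkin_tree_flat motzkin_kind_def)
next
  case (peak a b \<sigma>\<^sub>1 \<sigma>\<^sub>2)
  have "\<not> is_leaf (motzkin_tree (map uminus (rev a) @ [-1]) \<sigma>\<^sub>1)" "\<not> is_leaf (motzkin_tree (b @ [-1]) \<sigma>\<^sub>2)"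
    using motzkin_tree_structure[OF peak(5)] motzkin_tree_structure[OF peak(6)] by simp_all
  then show ?case
    using motzkin_tree_peak[OF peak(1,3,4)] unmarked_leaf_is_leaf by (auto simp: motzkin_kind_def)
qed

lemma tree_eq_motzkin_kind:
  assumes "motzkin_labelled p \<sigma>" "motzkin_labelled q \<tau>"
    "tree_eq (motzkin_tree p \<sigma>) (motzkin_tree q \<tau>)"
  shows "motzkin_kind q = motzkin_kind p"
  using tree_eq_root_kind[OF assms(3)] root_kind_motzkin_tree[OF assms(1)]
    root_kind_motzkin_tree[OF assms(2)] by simp

lemma motzkin_tree_inj:
  assumes "motzkin_labelled p \<sigma>" "motzkin_labelled q \<tau>"
    "tree_eq (motzkin_tree p \<sigma>) (motzkin_tree q \<tau>)"
  shows "p = q \<and> \<sigma> = \<tau>"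
  using assms(1) assms
proof (induction p \<sigma> arbitrary: q \<tau> rule: motzkin_labelled_induct)
  case (base x y)
  from base.prems(2) tree_eq_motzkin_kind[OF base.prems] show ?case
  proof (cases rule: motzkin_labelled_cases)
    case (base x' y')
    then show ?thesis using \<open>x < y\<close> base.prems(3)
      by (auto simp: motzkin_tree_base tree_eq_Node_iff tree_eq_Leaf_iff)
  qed (simp_all add: motzkin_kind_def)
next
  case (flat c x \<tau>')
  from flat.prems(2) tree_eq_motzkin_kind[OF flat.prems] show ?case
  proof (cases rule: motzkin_labelled_cases)
    case (flat c' x' \<tau>'')
    have "\<not> is_leaf (motzkin_tree (c' @ [-1]) \<tau>'')" using motzkin_tree_structure[OF flat(5)] by simp
    then have "x = x'" "tree_eq (motzkin_tree (c @ [-1]) \<tau>') (motzkin_tree (c' @ [-1]) \<tau>'')"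
      using flat flat.prems(3)
      by (auto simp: motzkin_tree_flat \<open>length \<tau>' = length c + 2\<close> tree_eq_Node_iff tree_eq_Leaf_iff)
    then show ?thesis using flat.IH[OF flat.hyps(3) flat(5)] flat by simp
  qed (simp_all add: motzkin_kind_def)
next
  case (peak a b \<sigma>\<^sub>1 \<sigma>\<^sub>2)
  from peak.prems(2) tree_eq_motzkin_kind[OF peak.prems] show ?case
  proof (cases rule: motzkin_labelled_cases)
    case (peak a' b' \<tau>\<^sub>1 \<tau>\<^sub>2)
    define A where "A = motzkin_tree (map uminus (rev a) @ [-1]) \<sigma>\<^sub>1"
    define B where "B = motzkin_tree (b @ [-1]) \<sigma>\<^sub>2"
    define A' where "A' = motzkin_tree (map uminus (rev a') @ [-1]) \<tau>\<^sub>1"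
    define B' where "B' = motzkin_tree (b' @ [-1]) \<tau>\<^sub>2"
    have "tree_eq (Node False A B) (Node False A' B')"
      using peak.prems(3) motzkin_tree_peak[OF peak.hyps(1,3,4)] motzkin_tree_peak[OF peak(3,5,6)] peak(1,2)
      by (simp add: A_def B_def A'_def B'_def)
    moreover have "fst (path_ends A) < fst (path_ends B)" "fst (path_ends A') < fst (path_ends B')"
      using motzkin_tree_structure[OF peak.hyps(5)] motzkin_tree_structure[OF peak.hyps(6)]
        motzkin_tree_structure[OF peak(7)] motzkin_tree_structure[OF peak(8)] peak.hyps(7) peak(9)
      unfolding A_def B_def A'_def B'_def by simp_all
    ultimately have "tree_eq A A'" "tree_eq B B'"
      using tree_eq_Node_ends_ordered motzkin_tree_distinct_leaves peak.hyps(5,6)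
      unfolding A_def B_def by blast+
    then have "map uminus (rev a) @ [-1] = map uminus (rev a') @ [-1] \<and> \<sigma>\<^sub>1 = \<tau>\<^sub>1"
      "b @ [-1] = b' @ [-1] \<and> \<sigma>\<^sub>2 = \<tau>\<^sub>2"
      using peak.IH(1)[OF peak.hyps(5) peak(7)] peak.IH(2)[OF peak.hyps(6) peak(8)] unfolding A_def B_def A'_def B'_def
      by simp_all
    then show ?thesis using peak(1,2) map_uminus_rev_inj[of a a'] by simp
  qed (simp_all add: motzkin_kind_def)
qed

definition motzkin_realizable :: "ltree \<Rightarrow> bool" where
  "motzkin_realizable t \<longleftrightarrow> (\<exists>p \<sigma>. motzkin_labelled p \<sigma> \<and> tree_eq (motzkin_tree p \<sigma>) t)"

lemma motzkin_tree_eq_leaves: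
  "motzkin_labelled p \<sigma> \<Longrightarrow> tree_eq (motzkin_tree p \<sigma>) t \<Longrightarrow> set (leaves t) = set \<sigma>"
  using motzkin_tree_structure tree_eq_leaves by metis

lemma motzkin_realizable_swap: "motzkin_realizable (Node m r l) \<Longrightarrow> motzkin_realizable (Node m l r)"
  unfolding motzkin_realizable_def using tree_eq_swap tree_eq_trans by blast

lemma motzkin_realizable_base:
  assumes "x \<noteq> y"
  shows "motzkin_realizable (Node False (Leaf False x) (Leaf False y))"
proof -
  have "motzkin_labelled [-1] [min x y, max x y]"
    using assms by (simp add: motzkin_labelled_base_iff min_def max_def)
  moreover have "tree_eq (motzkin_tree [-1] [min x y, max x y]) (Node False (Leaf False x) (Leaf False y))"
    using tree_eq_refl tree_eq_swap by (simp add: motzkin_tree_base min_def max_def)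
  ultimately show ?thesis unfolding motzkin_realizable_def by blast
qed

lemma motzkin_realizable_flat:
  assumes "motzkin_realizable v" "x \<notin> set (leaves v)"
  shows "motzkin_realizable (Node False (Leaf False x) v)"
proof -
  obtain c \<sigma> where v: "motzkin_labelled (c @ [-1]) \<sigma>" "tree_eq (motzkin_tree (c @ [-1]) \<sigma>) v"
    using assms(1) by (auto simp: motzkin_realizable_def motzkin_labelled_def)
  then have "length \<sigma> = length c + 2" using compatible_length by (fastforce simp: motzkin_labelled_def)
  moreover have "x \<notin> set \<sigma>" using motzkin_tree_eq_leaves[OF v] assms(2) by simp
  ultimately have "motzkin_labelled (0 # c @ [-1]) (x # \<sigma>)"
    "tree_eq (motzkin_tree (0 # c @ [-1]) (x # \<sigma>)) (Node False (Leaf False x) v)"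
    using v motzkin_labelled_flat_iff by (simp_all add: motzkin_tree_flat tree_eq.keep tree_eq.leaf)
  then show ?thesis unfolding motzkin_realizable_def by blast
qed

lemma motzkin_realizable_peak:
  assumes "motzkin_realizable u" "motzkin_realizable v" "set (leaves u) \<inter> set (leaves v) = {}"
  shows "motzkin_realizable (Node False u v)"
proof -
  have ordered: "motzkin_realizable (Node False u v)"
    if u: "motzkin_labelled p\<^sub>1 \<sigma>\<^sub>1" "tree_eq (motzkin_tree p\<^sub>1 \<sigma>\<^sub>1) u"
      and v: "motzkin_labelled p\<^sub>2 \<sigma>\<^sub>2" "tree_eq (motzkin_tree p\<^sub>2 \<sigma>\<^sub>2) v"
      and disj: "set (leaves u) \<inter> set (leaves v) = {}" and less: "hd \<sigma>\<^sub>1 < hd \<sigma>\<^sub>2"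
    for u v p\<^sub>1 \<sigma>\<^sub>1 p\<^sub>2 \<sigma>\<^sub>2
  proof -
    obtain a\<^sub>1 b where ab: "p\<^sub>1 = a\<^sub>1 @ [-1]" "excursion a\<^sub>1" "p\<^sub>2 = b @ [-1]"
      using u(1) v(1) by (auto simp: motzkin_labelled_def)
    define a where "a = map uminus (rev a\<^sub>1)"
    have a: "excursion a" "p\<^sub>1 = map uminus (rev a) @ [-1]"
      using ab excursion_rev by (simp_all add: a_def)
    have len: "length \<sigma>\<^sub>1 = length a + 2" "length \<sigma>\<^sub>2 = length b + 2"
      using u(1) v(1) compatible_length ab by (fastforce simp: motzkin_labelled_def a_def)+
    have "set \<sigma>\<^sub>1 \<inter> set \<sigma>\<^sub>2 = {}"
      using disj motzkin_tree_eq_leaves[OF u] motzkin_tree_eq_leaves[OF v] by simp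
    then have "motzkin_labelled (1 # a @ [-1] @ b @ [-1]) (rev \<sigma>\<^sub>1 @ \<sigma>\<^sub>2)"
      "tree_eq (motzkin_tree (1 # a @ [-1] @ b @ [-1]) (rev \<sigma>\<^sub>1 @ \<sigma>\<^sub>2)) (Node False u v)"
      using u v a ab less motzkin_labelled_peak_iff[OF a(1) len(1)] motzkin_tree_peak[OF a(1) len]
      by (simp_all add: tree_eq.keep)
    then show ?thesis unfolding motzkin_realizable_def by blast
  qed
  obtain p\<^sub>1 \<sigma>\<^sub>1 p\<^sub>2 \<sigma>\<^sub>2 where u: "motzkin_labelled p\<^sub>1 \<sigma>\<^sub>1" "tree_eq (motzkin_tree p\<^sub>1 \<sigma>\<^sub>1) u"
    and v: "motzkin_labelled p\<^sub>2 \<sigma>\<^sub>2" "tree_eq (motzkin_tree p\<^sub>2 \<sigma>\<^sub>2) v"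
    using assms(1,2) by (auto simp: motzkin_realizable_def)
  have "\<sigma>\<^sub>1 \<noteq> []" "\<sigma>\<^sub>2 \<noteq> []" using u(1) v(1) compatible_length
    by (fastforce simp: motzkin_labelled_def)+
  then have "hd \<sigma>\<^sub>1 \<in> set (leaves u)" "hd \<sigma>\<^sub>2 \<in> set (leaves v)"
    using motzkin_tree_eq_leaves[OF u] motzkin_tree_eq_leaves[OF v] by simp_all
  then have "hd \<sigma>\<^sub>1 < hd \<sigma>\<^sub>2 \<or> hd \<sigma>\<^sub>2 < hd \<sigma>\<^sub>1" using assms(3) by (cases "hd \<sigma>\<^sub>1 = hd \<sigma>\<^sub>2") auto
  then show ?thesis
    using ordered[OF u v assms(3)] ordered[OF v u] assms(3) motzkin_realizable_swap
    by (auto simp: Int_commute)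
qed

lemma motzkin_tree_surj:
  "nmarks t = 0 \<Longrightarrow> distinct (leaves t) \<Longrightarrow> \<not> is_leaf t \<Longrightarrow> motzkin_realizable t"
proof (induction t)
  case (Node m l r)
  have m: "m = False" and marks: "nmarks l = 0" "nmarks r = 0"
    using Node.prems(1) by (auto split: if_splits)
  have dist: "distinct (leaves l)" "distinct (leaves r)" "set (leaves l) \<inter> set (leaves r) = {}"
    using Node.prems(2) by auto
  show ?case
  proof (cases l; cases r)
    fix ml x mr y assume "l = Leaf ml x" "r = Leaf mr y"
    then show ?thesis using marks dist(3) m motzkin_realizable_base by (auto split: if_splits)
  next
    fix ml x m' r\<^sub>1 r\<^sub>2 assume "l = Leaf ml x" "r = Node m' r\<^sub>1 r\<^sub>2"
    then show ?thesis
      using marks dist m Node.IH(2) motzkin_realizable_flat[of r x] by (auto split: if_splits)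
  next
    fix m' l\<^sub>1 l\<^sub>2 mr y assume "l = Node m' l\<^sub>1 l\<^sub>2" "r = Leaf mr y"
    then show ?thesis
      using marks dist m Node.IH(1) motzkin_realizable_flat[of l y] motzkin_realizable_swap
      by (auto split: if_splits)
  next
    fix m' l\<^sub>1 l\<^sub>2 m'' r\<^sub>1 r\<^sub>2 assume "l = Node m' l\<^sub>1 l\<^sub>2" "r = Node m'' r\<^sub>1 r\<^sub>2"
    then show ?thesis using marks dist m Node.IH motzkin_realizable_peak by simp
  qed
qed simp

section \<open>Positive paths and marked trees\<close>

lemma leaves_mark_root [simp]: "leaves (mark_root t) = leaves t"
  by (cases t) auto

lemma nmarks_mark_root: "\<not> root_mark t \<Longrightarrow> nmarks (mark_root t) = Suc (nmarks t)"
  by (cases t) auto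

lemma single_mark_not_unmarked_leaf: "nmarks t = 1 \<Longrightarrow> \<not> unmarked_leaf t"
  by (cases t) (auto split: if_splits)

lemma positive_tree_structure:
  assumes "positive_labelled p \<sigma>"
  shows "nmarks (positive_tree p \<sigma>) = 1 \<and> set (leaves (positive_tree p \<sigma>)) = set \<sigma> \<and>
    length (leaves (positive_tree p \<sigma>)) = length \<sigma>"
  using assms
proof (induction rule: positive_labelled_induct)
  case (leaf x)
  then show ?case by (simp add: positive_tree_leaf)
next
  case (flat c x \<tau>)
  then show ?case by (simp add: positive_tree_flat)
next
  case (marked_root a \<sigma>)
  then show ?case
    using motzkin_tree_structure[OF marked_root(3)]
    by (simp add: positive_tree_marked_root nmarks_mark_root)
next
  case (split a d w \<sigma>\<^sub>1 \<sigma>\<^sub>2)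
  then show ?case
    using motzkin_tree_structure[OF split(6)] positive_tree_split[OF split(1-5)] by simp
qed

lemma positive_tree_distinct_leaves:
  assumes "positive_labelled p \<sigma>"
  shows "distinct (leaves (positive_tree p \<sigma>))"
proof -
  have "distinct \<sigma>" using assms by (simp add: positive_labelled_def)
  then show ?thesis using positive_tree_structure[OF assms] by (metis card_distinct distinct_card)
qed

definition positive_kind :: "int list \<Rightarrow> nat" where
  "positive_kind p = (if p = [] then 4 else if hd p = 0 then 1 else if excursion (tl p) then 3 else 0)"

lemma root_kind_positive_tree:
  "positive_labelled p \<sigma> \<Longrightarrow> root_kind (positive_tree p \<sigma>) = positive_kind p"
proof (induction rule: positive_labelled_induct)
  case (leaf x)
  then show ?case by (simp add: positive_tree_leaf positive_kind_def)
next
  case (flat c x \<tau>)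
  then show ?case
    using single_mark_not_unmarked_leaf positive_tree_structure[OF flat(3)]
    by (simp add: positive_tree_flat positive_kind_def)
next
  case (marked_root a \<sigma>)
  then show ?case
    using motzkin_tree_structure[OF marked_root(3)]
    by (cases "motzkin_tree (map uminus (rev a) @ [-1]) (rev \<sigma>)")
      (simp_all add: positive_tree_marked_root positive_kind_def)
next
  case (split a d w \<sigma>\<^sub>1 \<sigma>\<^sub>2)
  then show ?case
    using motzkin_tree_structure[OF split(6)] positive_tree_structure[OF split(7)]
      positive_tree_split[OF split(1-5)] not_excursion_split[OF split(1-3)]
      single_mark_not_unmarked_leaf unmarked_leaf_is_leaf
    by (auto simp: positive_kind_def)
qed

lemma tree_eq_positive_kind:
  assumes "positive_labelled p \<sigma>" "positive_labelled q \<tau>"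
    "tree_eq (positive_tree p \<sigma>) (positive_tree q \<tau>)"
  shows "positive_kind q = positive_kind p"
  using tree_eq_root_kind[OF assms(3)] root_kind_positive_tree[OF assms(1)]
    root_kind_positive_tree[OF assms(2)] by simp

lemma positive_tree_inj:
  assumes "positive_labelled p \<sigma>" "positive_labelled q \<tau>"
    "tree_eq (positive_tree p \<sigma>) (positive_tree q \<tau>)"
  shows "p = q \<and> \<sigma> = \<tau>"
  using assms(1) assms
proof (induction p \<sigma> arbitrary: q \<tau> rule: positive_labelled_induct)
  case (leaf x)
  from leaf.prems(2) tree_eq_positive_kind[OF leaf.prems] show ?case
  proof (cases rule: positive_labelled_cases)
    case (leaf x')
    then show ?thesis using leaf.prems(3) by (simp add: positive_tree_leaf tree_eq_Leaf_iff)
  qed (simp_all add: positive_kind_def split: if_splits)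
next
  case (flat c x \<tau>')
  from flat.prems(2) tree_eq_positive_kind[OF flat.prems] show ?case
  proof (cases rule: positive_labelled_cases)
    case (flat c' x' \<tau>'')
    have "nmarks (positive_tree c' \<tau>'') = 1" using positive_tree_structure[OF flat(5)] by simp
    then have "x = x'" "tree_eq (positive_tree c \<tau>') (positive_tree c' \<tau>'')"
      using flat flat.prems(3)
      by (auto simp: positive_tree_flat \<open>length \<tau>' = length c + 1\<close> tree_eq_Node_iff tree_eq_Leaf_iff)
    then show ?thesis using flat.IH[OF flat.hyps(3) flat(5)] flat by simp
  qed (simp_all add: positive_kind_def split: if_splits)
next
  case (marked_root a \<sigma>)
  note kind = tree_eq_positive_kind[OF marked_root.prems]
  from marked_root.prems(2) kind show ?case
  proof (cases rule: positive_labelled_cases)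
    case (marked_root a')
    have "tree_eq (mark_root (motzkin_tree (map uminus (rev a) @ [-1]) (rev \<sigma>)))
      (mark_root (motzkin_tree (map uminus (rev a') @ [-1]) (rev \<tau>)))"
      using marked_root.prems(3) positive_tree_marked_root[OF marked_root.hyps(1,2)]
        positive_tree_marked_root[OF marked_root(2,3)] marked_root(1) by simp
    then have "tree_eq (motzkin_tree (map uminus (rev a) @ [-1]) (rev \<sigma>))
      (motzkin_tree (map uminus (rev a') @ [-1]) (rev \<tau>))"
      using tree_eq_mark_root_iff motzkin_tree_structure[OF marked_root.hyps(3)]
        motzkin_tree_structure[OF marked_root(4)] by simp
    then show ?thesis
      using motzkin_tree_inj[OF marked_root.hyps(3) marked_root(4)] marked_root(1)
        map_uminus_rev_inj[of a a'] by simp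
  next
    case (split a' d' w')
    then show ?thesis using kind marked_root.hyps(1)
      not_excursion_split[OF split(3-5)] by (simp add: positive_kind_def)
  qed (simp_all add: positive_kind_def split: if_splits)
next
  case (split a d w \<sigma>\<^sub>1 \<sigma>\<^sub>2)
  from split.prems(2) tree_eq_positive_kind[OF split.prems] show ?case
  proof (cases rule: positive_labelled_cases)
    case (split a' d' w' \<tau>\<^sub>1 \<tau>\<^sub>2)
    define A where "A = motzkin_tree (map uminus (rev a) @ [-1]) \<sigma>\<^sub>1"
    define B where "B = positive_tree w \<sigma>\<^sub>2"
    define A' where "A' = motzkin_tree (map uminus (rev a') @ [-1]) \<tau>\<^sub>1"
    define B' where "B' = positive_tree w' \<tau>\<^sub>2"
    have "tree_eq (Node False A B) (Node False A' B')"
      using split.prems(3) positive_tree_split[OF split.hyps(1-5)] positive_tree_split[OF split(3-7)]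
        split(1,2)
      by (simp add: A_def B_def A'_def B'_def)
    moreover have "nmarks A \<noteq> nmarks B'"
      using motzkin_tree_structure[OF split.hyps(6)] positive_tree_structure[OF split(9)]
      by (simp add: A_def B'_def)
    ultimately have "tree_eq A A'" "tree_eq B B'" using tree_eq_Node_marks_differ by blast+
    then have "map uminus (rev a) @ [-1] = map uminus (rev a') @ [-1] \<and> \<sigma>\<^sub>1 = \<tau>\<^sub>1" "w = w' \<and> \<sigma>\<^sub>2 = \<tau>\<^sub>2"
      using motzkin_tree_inj[OF split.hyps(6) split(8)] split.IH[OF split.hyps(7) split(9)]
      unfolding A_def B_def A'_def B'_def by simp_all
    moreover have "d = d'" using calculation split.hyps(2,8) split(4,10) by auto
    ultimately show ?thesis using split(1,2) map_uminus_rev_inj[of a a'] by simp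
  qed (use not_excursion_split[OF split.hyps(1-3)] in \<open>simp_all add: positive_kind_def split: if_splits\<close>)
qed

definition positive_realizable :: "ltree \<Rightarrow> bool" where
  "positive_realizable t \<longleftrightarrow> (\<exists>p \<sigma>. positive_labelled p \<sigma> \<and> tree_eq (positive_tree p \<sigma>) t)"

lemma positive_tree_eq_leaves:
  "positive_labelled p \<sigma> \<Longrightarrow> tree_eq (positive_tree p \<sigma>) t \<Longrightarrow> set (leaves t) = set \<sigma>"
  using positive_tree_structure tree_eq_leaves by metis

lemma positive_realizable_swap: "positive_realizable (Node m r l) \<Longrightarrow> positive_realizable (Node m l r)"
  unfolding positive_realizable_def using tree_eq_swap tree_eq_trans by blast

lemma positive_realizable_leaf: "positive_realizable (Leaf True x)"
  unfolding positive_realizable_def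
  by (intro exI[of _ "[]"] exI[of _ "[x]"]) (simp add: positive_tree_leaf tree_eq_refl)

lemma positive_realizable_flat:
  assumes "positive_realizable v" "x \<notin> set (leaves v)"
  shows "positive_realizable (Node False (Leaf False x) v)"
proof -
  obtain p \<sigma> where v: "positive_labelled p \<sigma>" "tree_eq (positive_tree p \<sigma>) v"
    using assms(1) by (auto simp: positive_realizable_def)
  then have "length \<sigma> = length p + 1" using compatible_length by (simp add: positive_labelled_def)
  moreover have "x \<notin> set \<sigma>" using positive_tree_eq_leaves[OF v] assms(2) by simp
  ultimately have "positive_labelled (0 # p) (x # \<sigma>)"
    "tree_eq (positive_tree (0 # p) (x # \<sigma>)) (Node False (Leaf False x) v)"
    using v positive_labelled_flat_iff by (simp_all add: positive_tree_flat tree_eq.keep tree_eq.leaf)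
  then show ?thesis unfolding positive_realizable_def by blast
qed

lemma positive_realizable_mark_root:
  assumes "motzkin_realizable t"
  shows "positive_realizable (mark_root t)"
proof -
  obtain a\<^sub>1 \<sigma> where t: "motzkin_labelled (a\<^sub>1 @ [-1]) \<sigma>" "tree_eq (motzkin_tree (a\<^sub>1 @ [-1]) \<sigma>) t"
    and a\<^sub>1: "excursion a\<^sub>1"
    using assms by (auto simp: motzkin_realizable_def motzkin_labelled_def)
  define a where "a = map uminus (rev a\<^sub>1)"
  have a: "excursion a" "a\<^sub>1 = map uminus (rev a)" using a\<^sub>1 excursion_rev by (simp_all add: a_def)
  have "length (rev \<sigma>) = length a + 2"
    using t(1) compatible_length by (fastforce simp: motzkin_labelled_def a_def)
  then have "positive_labelled (1 # a) (rev \<sigma>)"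
    "positive_tree (1 # a) (rev \<sigma>) = mark_root (motzkin_tree (a\<^sub>1 @ [-1]) \<sigma>)"
    using t(1) a positive_labelled_marked_root_iff positive_tree_marked_root by simp_all
  moreover have "tree_eq (mark_root (motzkin_tree (a\<^sub>1 @ [-1]) \<sigma>)) (mark_root t)"
    using tree_eq_mark_root_iff tree_eq_root_mark[OF t(2)] t(2) by simp
  ultimately show ?thesis unfolding positive_realizable_def by (intro exI[of _ "1 # a"] exI[of _ "rev \<sigma>"]) simp
qed

lemma positive_realizable_split:
  assumes "motzkin_realizable u" "positive_realizable v" "set (leaves u) \<inter> set (leaves v) = {}"
  shows "positive_realizable (Node False u v)"
proof -
  obtain a\<^sub>1 \<sigma>\<^sub>1 where u: "motzkin_labelled (a\<^sub>1 @ [-1]) \<sigma>\<^sub>1" "tree_eq (motzkin_tree (a\<^sub>1 @ [-1]) \<sigma>\<^sub>1) u"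
    and a\<^sub>1: "excursion a\<^sub>1"
    using assms(1) by (auto simp: motzkin_realizable_def motzkin_labelled_def)
  obtain w \<sigma>\<^sub>2 where v: "positive_labelled w \<sigma>\<^sub>2" "tree_eq (positive_tree w \<sigma>\<^sub>2) v"
    using assms(2) by (auto simp: positive_realizable_def)
  define a where "a = map uminus (rev a\<^sub>1)"
  define d :: int where "d = (if hd \<sigma>\<^sub>1 < hd \<sigma>\<^sub>2 then -1 else 1)"
  have a: "excursion a" "a\<^sub>1 = map uminus (rev a)" using a\<^sub>1 excursion_rev by (simp_all add: a_def)
  have len: "length \<sigma>\<^sub>1 = length a + 2" "length \<sigma>\<^sub>2 = length w + 1"
    using u(1) v(1) compatible_length
    by (fastforce simp: motzkin_labelled_def positive_labelled_def a_def)+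
  have d: "d \<in> {-1, 1}" "d = -1 \<longleftrightarrow> hd \<sigma>\<^sub>1 < hd \<sigma>\<^sub>2" and w: "nonneg_from 0 w"
    using v(1) by (auto simp: d_def positive_labelled_def)
  have "set \<sigma>\<^sub>1 \<inter> set \<sigma>\<^sub>2 = {}"
    using assms(3) motzkin_tree_eq_leaves[OF u] positive_tree_eq_leaves[OF v] by simp
  then have "positive_labelled (1 # a @ [d] @ w) (rev \<sigma>\<^sub>1 @ \<sigma>\<^sub>2)"
    "tree_eq (positive_tree (1 # a @ [d] @ w) (rev \<sigma>\<^sub>1 @ \<sigma>\<^sub>2)) (Node False u v)"
    using u v a d positive_labelled_split_iff[OF a(1) d(1) w len(1)] positive_tree_split[OF a(1) d(1) w len]
    by (simp_all add: tree_eq.keep)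
  then show ?thesis unfolding positive_realizable_def by blast
qed

lemma positive_tree_surj: "nmarks t = 1 \<Longrightarrow> distinct (leaves t) \<Longrightarrow> positive_realizable t"
proof (induction t)
  case (Leaf m x)
  then show ?case using positive_realizable_leaf by (simp split: if_splits)
next
  case (Node m l r)
  have dist: "distinct (leaves l)" "distinct (leaves r)" "set (leaves l) \<inter> set (leaves r) = {}"
    using Node.prems(2) by auto
  have child: "positive_realizable (Node False u v)"
    if "nmarks u = 0" "distinct (leaves u)" "positive_realizable v"
      "set (leaves u) \<inter> set (leaves v) = {}" for u v
  proof (cases u)
    case (Leaf m' x)
    then show ?thesis using that positive_realizable_flat by (simp split: if_splits)
  next
    case (Node m' u\<^sub>1 u\<^sub>2)
    then show ?thesis using that motzkin_tree_surj positive_realizable_split by simp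
  qed
  consider "m" | "\<not> m" "nmarks r = 1" | "\<not> m" "nmarks l = 1"
    using Node.prems(1) by (cases m) (auto simp: add_is_1)
  then show ?case
  proof cases
    case 1
    then have "motzkin_realizable (Node False l r)"
      using Node.prems motzkin_tree_surj[of "Node False l r"] by simp
    then show ?thesis using positive_realizable_mark_root[of "Node False l r"] 1 by simp
  next
    case 2
    then show ?thesis using child[of l r] Node.prems(1) Node.IH(2) dist by simp
  next
    case 3
    then show ?thesis
      using child[of r l] Node.prems(1) Node.IH(1) dist positive_realizable_swap
      by (simp add: Int_commute)
  qed
qed

section \<open>Standardization\<close>

lemma relabel_relabel: "relabel f (relabel g t) = relabel (f \<circ> g) t"
  by (induction t) auto

lemma relabel_id_on_leaves: "(\<And>x. x \<in> set (leaves t) \<Longrightarrow> f x = x) \<Longrightarrow> relabel f t = t"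
  by (induction t) auto

lemma relabel_mark_root: "relabel f (mark_root t) = mark_root (relabel f t)"
  by (cases t) auto

lemma motzkin_tree_map_mono:
  assumes "motzkin_labelled p \<sigma>" "strict_mono_on (set \<sigma>) g"
  shows "motzkin_tree p (map g \<sigma>) = relabel g (motzkin_tree p \<sigma>)"
  using assms
proof (induction arbitrary: g rule: motzkin_labelled_induct)
  case (base x y)
  then have "g x < g y" by (simp add: strict_mono_onD)
  then show ?case using base by (simp add: motzkin_tree_base min_def max_def)
next
  case (flat c x \<tau>)
  then show ?case
    using monotone_on_subset[OF flat.prems, of "set \<tau>"] by (auto simp: motzkin_tree_flat)
next
  case (peak a b \<sigma>\<^sub>1 \<sigma>\<^sub>2)
  then have "motzkin_tree (map uminus (rev a) @ [-1]) (map g \<sigma>\<^sub>1) = relabel g (motzkin_tree (map uminus (rev a) @ [-1]) \<sigma>\<^sub>1)"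
    "motzkin_tree (b @ [-1]) (map g \<sigma>\<^sub>2) = relabel g (motzkin_tree (b @ [-1]) \<sigma>\<^sub>2)"
    using monotone_on_subset[OF peak.prems] by auto
  then show ?case
    using motzkin_tree_peak[OF peak(1,3,4)] motzkin_tree_peak[OF peak(1), of "map g \<sigma>\<^sub>1" "map g \<sigma>\<^sub>2" b]
      peak(3,4) by (simp add: rev_map)
qed

lemma positive_tree_map_mono:
  assumes "positive_labelled p \<sigma>" "strict_mono_on (set \<sigma>) g"
  shows "positive_tree p (map g \<sigma>) = relabel g (positive_tree p \<sigma>)"
  using assms
proof (induction arbitrary: g rule: positive_labelled_induct)
  case (leaf x)
  then show ?case by (simp add: positive_tree_leaf)
next
  case (flat c x \<tau>)
  then show ?case
    using monotone_on_subset[OF flat.prems, of "set \<tau>"] by (auto simp: positive_tree_flat)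
next
  case (marked_root a \<sigma>)
  then show ?case
    using motzkin_tree_map_mono[OF marked_root(3), of g]
    by (simp add: positive_tree_marked_root relabel_mark_root rev_map)
next
  case (split a d w \<sigma>\<^sub>1 \<sigma>\<^sub>2)
  then have "motzkin_tree (map uminus (rev a) @ [-1]) (map g \<sigma>\<^sub>1) = relabel g (motzkin_tree (map uminus (rev a) @ [-1]) \<sigma>\<^sub>1)"
    "positive_tree w (map g \<sigma>\<^sub>2) = relabel g (positive_tree w \<sigma>\<^sub>2)"
    using monotone_on_subset[OF split.prems] motzkin_tree_map_mono by auto
  then show ?case
    using positive_tree_split[OF split(1-5)] positive_tree_split[OF split(1-3), of "map g \<sigma>\<^sub>1" "map g \<sigma>\<^sub>2"]
      split(4,5) by (simp add: rev_map)
qed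

lemma laminv_strict_mono_on: "finite J \<Longrightarrow> strict_mono_on J (laminv J)"
proof (rule strict_mono_onI)
  fix x y assume "finite J" "x \<in> J" "y \<in> J" "x < y"
  then have "{z \<in> J. z \<le> x} \<subseteq> {z \<in> J. z \<le> y}" "y \<in> {z \<in> J. z \<le> y} - {z \<in> J. z \<le> x}"
    by auto
  then have "{z \<in> J. z \<le> x} \<subset> {z \<in> J. z \<le> y}" by blast
  then show "laminv J x < laminv J y" using \<open>finite J\<close> by (simp add: laminv_def psubset_card_mono)
qed

lemma laminv_image: "finite J \<Longrightarrow> laminv J ` J = {1..card J}"
proof -
  assume f: "finite J"
  have "laminv J ` J \<subseteq> {1..card J}"
  proof
    fix y assume "y \<in> laminv J ` J"
    then obtain x where "x \<in> J" "y = card {z \<in> J. z \<le> x}" by (auto simp: laminv_def)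
    moreover have "card {z \<in> J. z \<le> x} \<le> card J" using f by (intro card_mono) auto
    moreover have "0 < card {z \<in> J. z \<le> x}" using f calculation(1) by (subst card_gt_0_iff) auto
    ultimately show "y \<in> {1..card J}" by simp
  qed
  moreover have "card (laminv J ` J) = card {1..card J}"
    using card_image[OF strict_mono_on_imp_inj_on[OF laminv_strict_mono_on[OF f]]] by simp
  ultimately show ?thesis by (intro card_subset_eq) auto
qed

lemma strict_sorted_rank:
  fixes xs :: "nat list"
  assumes s: "sorted_wrt (<) xs" and i: "i < length xs"
  shows "card {z \<in> set xs. z \<le> xs ! i} = Suc i"
proof -
  have eq: "{z \<in> set xs. z \<le> xs ! i} = (\<lambda>j. xs ! j) ` {0..i}"
  proof
    show "{z \<in> set xs. z \<le> xs ! i} \<subseteq> (\<lambda>j. xs ! j) ` {0..i}"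
    proof
      fix z assume z: "z \<in> {z \<in> set xs. z \<le> xs ! i}"
      then obtain j where j: "j < length xs" "z = xs ! j" by (auto simp: in_set_conv_nth)
      have "\<not> i < j" using sorted_wrt_nth_less[OF s, of i j] j z by auto
      then show "z \<in> (\<lambda>j. xs ! j) ` {0..i}" using j by auto
    qed
  next
    show "(\<lambda>j. xs ! j) ` {0..i} \<subseteq> {z \<in> set xs. z \<le> xs ! i}"
    proof
      fix z assume "z \<in> (\<lambda>j. xs ! j) ` {0..i}"
      then obtain j where j: "j \<le> i" "z = xs ! j" by auto
      have "xs ! j \<le> xs ! i" using sorted_wrt_nth_less[OF s, of j i] j i
        by (cases "j = i") auto
      then show "z \<in> {z \<in> set xs. z \<le> xs ! i}" using j i by auto
    qed
  qed
  have d: "distinct xs" using s strict_sorted_iff by blast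
  have "inj_on (\<lambda>j. xs ! j) {0..i}" using d i by (auto simp: inj_on_def nth_eq_iff_index_eq)
  then show ?thesis using eq by (simp add: card_image)
qed

lemma lam_laminv: "finite J \<Longrightarrow> x \<in> J \<Longrightarrow> lam J (laminv J x) = x"
proof -
  assume f: "finite J" and x: "x \<in> J"
  define xs where "xs = sorted_list_of_set J"
  have s: "sorted_wrt (<) xs" and sx: "set xs = J" using f by (auto simp: xs_def)
  obtain i where i: "i < length xs" "x = xs ! i" using x sx by (metis in_set_conv_nth)
  have "laminv J x = Suc i" using strict_sorted_rank[OF s i(1)] i(2) sx by (simp add: laminv_def)
  then show ?thesis using i by (simp add: lam_def xs_def)
qed

lemma laminv_atLeastAtMost: "x \<in> {1..n} \<Longrightarrow> laminv {1..n} x = x"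
proof -
  assume "x \<in> {1..n}"
  then have "{y \<in> {1..n}. y \<le> x} = {1..x}" by auto
  then show ?thesis by (simp add: laminv_def)
qed

definition standardize :: "nat list \<Rightarrow> nat list" where
  "standardize \<sigma> = map (laminv (set \<sigma>)) \<sigma>"

lemma set_standardize: "distinct \<sigma> \<Longrightarrow> set (standardize \<sigma>) = {1..length \<sigma>}"
  using laminv_image[of "set \<sigma>"] distinct_card[of \<sigma>] by (simp add: standardize_def)

lemma standardize_id:
  assumes "set \<sigma> = {1..length \<sigma>}"
  shows "standardize \<sigma> = \<sigma>"
  unfolding standardize_def
proof (rule map_idI)
  fix x assume "x \<in> set \<sigma>"
  then show "laminv (set \<sigma>) x = x" using assms laminv_atLeastAtMost by metis
qed

lemma motzkin_labelled_standardize: "motzkin_labelled p \<sigma> \<Longrightarrow> motzkin_labelled p (standardize \<sigma>)"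
  using compatible_map_mono[OF laminv_strict_mono_on]
    strict_mono_on_imp_inj_on[OF laminv_strict_mono_on, of "set \<sigma>"]
  by (auto simp: motzkin_labelled_def standardize_def distinct_map)

lemma positive_labelled_standardize: "positive_labelled p \<sigma> \<Longrightarrow> positive_labelled p (standardize \<sigma>)"
  using compatible_map_mono[OF laminv_strict_mono_on]
    strict_mono_on_imp_inj_on[OF laminv_strict_mono_on, of "set \<sigma>"]
  by (auto simp: positive_labelled_def standardize_def distinct_map)

lemma relabel_lam_laminv:
  assumes "set (leaves t) \<subseteq> J" "finite J"
  shows "relabel (lam J) (relabel (laminv J) t) = t"
  using assms lam_laminv by (auto simp: relabel_relabel intro!: relabel_id_on_leaves)

lemma motzkin_tree_standardize:
  assumes "motzkin_labelled p \<sigma>"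
  shows "relabel (lam (set \<sigma>)) (motzkin_tree p (standardize \<sigma>)) = motzkin_tree p \<sigma>"
  using motzkin_tree_map_mono[OF assms laminv_strict_mono_on] motzkin_tree_structure[OF assms]
    relabel_lam_laminv[of "motzkin_tree p \<sigma>" "set \<sigma>"]
  by (simp add: standardize_def)

lemma positive_tree_standardize:
  assumes "positive_labelled p \<sigma>"
  shows "relabel (lam (set \<sigma>)) (positive_tree p (standardize \<sigma>)) = positive_tree p \<sigma>"
  using positive_tree_map_mono[OF assms laminv_strict_mono_on] positive_tree_structure[OF assms]
    relabel_lam_laminv[of "positive_tree p \<sigma>" "set \<sigma>"]
  by (simp add: standardize_def)

lemma phi_eq_motzkin_tree:
  "motzkin_labelled p \<sigma> \<Longrightarrow> set \<sigma> = {1..length \<sigma>} \<Longrightarrow> phi p \<sigma> = motzkin_tree p \<sigma>"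
proof (induction "length \<sigma>" arbitrary: p \<sigma> rule: less_induct)
  case less
  have std: "relabel (lam (set \<tau>)) (phi q (standardize \<tau>)) = motzkin_tree q \<tau>"
    if "motzkin_labelled q \<tau>" "length \<tau> < length \<sigma>" for q \<tau>
    using less.hyps[of "standardize \<tau>" q] that motzkin_labelled_standardize[OF that(1)]
      set_standardize motzkin_tree_standardize[OF that(1)]
    by (simp add: standardize_def motzkin_labelled_def)
  from less.prems(1) show ?case
  proof (cases rule: motzkin_labelled_cases)
    case (base x y)
    then have "{x, y} = {1..2}" using less.prems(2) by simp
    then have "x \<in> {1..2}" "y \<in> {1..2}" by blast+
    then have "x = 1" "y = 2" using \<open>x < y\<close> by auto
    then show ?thesis using base by (simp add: phi_base motzkin_tree_base)
  next
    case (flat c x \<tau>)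
    then have "{1..length \<tau> + 1} - {x} = set \<tau>" using less.prems(2) by auto
    then show ?thesis using flat std[of "c @ [-1]" \<tau>]
      by (simp add: phi_flat motzkin_tree_flat standardize_def)
  next
    case (peak a b \<sigma>\<^sub>1 \<sigma>\<^sub>2)
    then show ?thesis using std[of "map uminus (rev a) @ [-1]" \<sigma>\<^sub>1] std[of "b @ [-1]" \<sigma>\<^sub>2]
      phi_peak[OF peak(3,5,6)] motzkin_tree_peak[OF peak(3,5,6)] by (simp add: standardize_def)
  qed
qed

lemma phi'_eq_positive_tree:
  "positive_labelled p \<sigma> \<Longrightarrow> set \<sigma> = {1..length \<sigma>} \<Longrightarrow> phi' p \<sigma> = positive_tree p \<sigma>"
proof (induction "length \<sigma>" arbitrary: p \<sigma> rule: less_induct)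
  case less
  have std: "relabel (lam (set \<tau>)) (phi' q (standardize \<tau>)) = positive_tree q \<tau>"
    if "positive_labelled q \<tau>" "length \<tau> < length \<sigma>" for q \<tau>
    using less.hyps[of "standardize \<tau>" q] that positive_labelled_standardize[OF that(1)]
      set_standardize positive_tree_standardize[OF that(1)]
    by (simp add: standardize_def positive_labelled_def)
  have std_motzkin: "relabel (lam (set \<tau>)) (phi q (standardize \<tau>)) = motzkin_tree q \<tau>"
    if "motzkin_labelled q \<tau>" for q \<tau>
    using phi_eq_motzkin_tree[of q "standardize \<tau>"] that motzkin_labelled_standardize[OF that(1)]
      set_standardize motzkin_tree_standardize[OF that(1)]
    by (simp add: standardize_def motzkin_labelled_def)
  from less.prems(1) show ?case
  proof (cases rule: positive_labelled_cases)
    case (leaf x)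
    then show ?thesis by (simp add: phi'_leaf positive_tree_leaf)
  next
    case (flat c x \<tau>)
    then have "{1..length \<tau> + 1} - {x} = set \<tau>" using less.prems(2) by auto
    then show ?thesis using flat std[of c \<tau>]
      by (simp add: phi'_flat positive_tree_flat standardize_def)
  next
    case (marked_root a)
    have "map (laminv (set \<sigma>)) (rev \<sigma>) = rev \<sigma>"
      using standardize_id[OF less.prems(2)] by (simp add: standardize_def rev_map[symmetric])
    moreover have "phi (map uminus (rev a) @ [-1]) (rev \<sigma>) = motzkin_tree (map uminus (rev a) @ [-1]) (rev \<sigma>)"
      using phi_eq_motzkin_tree marked_root(4) less.prems(2) by simp
    ultimately show ?thesis
      using marked_root by (simp add: phi'_marked_root positive_tree_marked_root)
  next
    case (split a d w \<sigma>\<^sub>1 \<sigma>\<^sub>2)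
    then show ?thesis using std_motzkin[of "map uminus (rev a) @ [-1]" \<sigma>\<^sub>1] std[of w \<sigma>\<^sub>2]
      phi'_split[OF split(3-7)] positive_tree_split[OF split(3-7)] by (simp add: standardize_def)
  qed
qed

lemma tree_class_eq_iff: "tree_class t = tree_class t' \<longleftrightarrow> tree_eq t t'"
  using tree_class_eq tree_eq_refl unfolding tree_class_def by blast

lemma marked_labelled_positive_tree:
  "positive_labelled p \<sigma> \<Longrightarrow> set \<sigma> = {1..n} \<Longrightarrow> marked_labelled_tree n (positive_tree p \<sigma>)"
  using positive_tree_structure positive_tree_distinct_leaves
  by (simp add: marked_labelled_tree_def labelled_tree_def)

lemma bij_betw_positive_tree:
  "bij_betw (\<lambda>(p, \<sigma>). tree_class (positive_tree p \<sigma>))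
     {(p, \<sigma>). positive_labelled p \<sigma> \<and> set \<sigma> = {1..n}} (marked_trees n)"
  unfolding bij_betw_def
proof
  show "inj_on (\<lambda>(p, \<sigma>). tree_class (positive_tree p \<sigma>))
      {(p, \<sigma>). positive_labelled p \<sigma> \<and> set \<sigma> = {1..n}}"
    using positive_tree_inj by (auto intro!: inj_onI simp: tree_class_eq_iff)
  have "X \<in> (\<lambda>(p, \<sigma>). tree_class (positive_tree p \<sigma>)) ` {(p, \<sigma>). positive_labelled p \<sigma> \<and> set \<sigma> = {1..n}}"
    if X: "X \<in> marked_trees n" for X
  proof -
    obtain t where t: "X = tree_class t" "nmarks t = 1" "distinct (leaves t)" "set (leaves t) = {1..n}"
      using X by (auto simp: marked_trees_def marked_labelled_tree_def labelled_tree_def)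
    then obtain p \<sigma> where "positive_labelled p \<sigma>" "tree_eq (positive_tree p \<sigma>) t"
      using positive_tree_surj unfolding positive_realizable_def by blast
    then show ?thesis
      using t(1,4) positive_tree_eq_leaves tree_class_eq by (auto intro!: image_eqI[of _ _ "(p, \<sigma>)"])
  qed
  then show "(\<lambda>(p, \<sigma>). tree_class (positive_tree p \<sigma>)) `
      {(p, \<sigma>). positive_labelled p \<sigma> \<and> set \<sigma> = {1..n}} = marked_trees n"
    using marked_labelled_positive_tree by (auto simp: marked_trees_def)
qed

theorem theorem2:
  fixes n :: nat
  assumes "n \<ge> 1"
  shows "bij_betw (\<lambda>(p, \<sigma>). tree_class (phi' p \<sigma>))
           {(p, \<sigma>). positive_path n p \<sigma>} (marked_trees n)"
proof -
  let ?P = "{(p, \<sigma>). positive_labelled p \<sigma> \<and> set \<sigma> = {1..n}}"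
  have P: "{(p, \<sigma>). positive_path n p \<sigma>} = ?P" using positive_path_iff[OF assms] by auto
  have "phi' p \<sigma> = positive_tree p \<sigma>" if "(p, \<sigma>) \<in> ?P" for p \<sigma>
    using that phi'_eq_positive_tree distinct_card[of \<sigma>] by (auto simp: positive_labelled_def)
  then have "(\<lambda>(p, \<sigma>). tree_class (phi' p \<sigma>)) x = (\<lambda>(p, \<sigma>). tree_class (positive_tree p \<sigma>)) x"
    if "x \<in> ?P" for x
    using that by (cases x) simp
  then show ?thesis unfolding P using bij_betw_cong bij_betw_positive_tree by blast
qed

end
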